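(* Let $\mathcal X$ and $\Xi$ be Polish spaces and suppose Assumption A (described in the context) holds. Then: (i) If $(G_n,x^n)\to(G,x)$ in $\mathcal G_*[\mathcal X]$ as $n\to\infty$, then $P^{G_n,x^n}\to P^{G,x}$ weakly in $\mathcal P(\mathcal G_*[\mathcal X^\infty])$. (ii) For every $M\in\mathcal P(\mathcal G_*[\mathcal X])$ the measure $P[M]$ is well defined, and if $M_n\to M$ weakly in $\mathcal P(\mathcal G_*[\mathcal X])$, then $P[M_n]\to P[M]$ weakly in $\mathcal P(\mathcal G_*[\mathcal X^\infty])$.
   Context: All graphs are simple, locally finite, with finite or countably infinite vertex set; $N_v(G)$ denotes the set of neighbours of $v$ in $G$. For a metric space $(\mathcal Y,d)$, a $\mathcal Y$-marked rooted graph is a pair $(G,y)$ with $G$ a connected graph with distinguished root and $y=(y_v)_{v\in G}\in\mathcal Y^G$; two such are isomorphic if there is a bijection of vertex sets preserving root, edges and marks. $\mathcal G_*[\mathcal Y]$ is the set of isomorphism classes. For $k\in\mathbb N$, $B_k(G)$ is the induced rooted subgraph on vertices at graph distance at most $k$ from the root. $(G_n,y^n)\to(G,y)$ in $\mathcal G_*[\mathcal Y]$ means: for every $k\in\mathbb N$ and $\epsilon>0$ there is $n_k$ such that for every $n\ge n_k$ there is a (rooted graph) isomorphism $\varphi:B_k(G_n)\to B_k(G)$ with $\max_{v\in B_k(G_n)}d(y^n_v,y_{\varphi(v)})<\epsilon$; this is a metrizable topology, Polish when $\mathcal Y$ is Polish. Spaces of probability measures carry the weak topology. For a metric space $\mathcal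 Y$, $S^{\sqcup}(\mathcal Y)=\bigsqcup_{k\ge 0}S^k(\mathcal Y)$ is the space of finite unordered sequences of elements of $\mathcal Y$ of arbitrary length (possibly zero), where $S^k(\mathcal Y)$ is $\mathcal Y^k$ modulo the action of the symmetric group and $S^0(\mathcal Y)$ is a point, with the disjoint union topology; for a finite set $A$, $(z_v)_{v\in A}$ is viewed as an element of $S^\sqcup(\mathcal Y)$. $\mathcal X^\infty$ is the space of sequences $(x(k))_{k\in\mathbb N_0}$ in $\mathcal X$ with the product topology, and $x[k]=(x(0),\dots,x(k))\in\mathcal X^{k+1}$. Assumption A: (A.1) for each (possibly disconnected) graph $G$ the $\Xi$-valued noises $(\xi_v(k))_{v\in G,k\in\mathbb N}$ are i.i.d., with the same law for every $G$ (and independent of the initial data); (A.2) for each $k\in\mathbb N_0$, $F^k:\mathcal X^{k+1}\times S^\sqcup(\mathcal X^{k+1})\times\Xi\to\mathcal X$ is continuous. For a graph $G$ and $x\in\mathcal X^G$, the process $X^{G,x}=(X^{G,x}_v)_{v\in G}$ is defined by $X^{G,x}_v(0)=x_v$ and $X^{G,x}_v(k+1)=F^k\big(X^{G,x}_v[k],(X^{G,x}_u[k])_{u\in N_v(G)},\xi_v(k+1)\big)$ for $v\in G$, $k\in\mathbb N_0$. For $(G,x)\in\mathcal G_*[\mathcal X]$, $P^{G,x}\in\mathcal P(\mathcal G_*[\mathcal X^\infty])$ is the law of $(G,X^{G,x})$ (it depends only on the isomorphism class of $(G,x)$). For $M\in\mathcal P(\mathcal G_*[\mathcal X])$, $P[M]\in\mathcal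 P(\mathcal G_*[\mathcal X^\infty])$ is defined by $\int\varphi\,dP[M]=\int\langle P^{G,x},\varphi\rangle\,M(d(G,x))$ for bounded continuous $\varphi$ on $\mathcal G_*[\mathcal X^\infty]$. *)

theory Defs
  imports "HOL-Analysis.Analysis" "HOL-Probability.Probability"
begin

definition borel_of :: "'a topology \<Rightarrow> 'a measure" where
  "borel_of T = sigma (topspace T) {U. openin T U}"

definition weak_conv_top :: "'a topology \<Rightarrow> (nat \<Rightarrow> 'a measure) \<Rightarrow> 'a measure \<Rightarrow> bool" where
  "weak_conv_top T \<mu>s \<mu> \<longleftrightarrow>
     (\<forall>\<phi>. continuous_map T euclideanreal \<phi> \<and> bounded (\<phi> ` topspace T) \<longrightarrow>
        (\<lambda>n. \<integral>z. \<phi> z \<partial>(\<mu>s n)) \<longlonglongrightarrow> (\<integral>z. \<phi> z \<partial>\<mu>))"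

text \<open>Topology determined by a notion of sequential convergence on a set S
  (for a metrizable topology this recovers the topology).\<close>
definition seq_open :: "'a set \<Rightarrow> ((nat \<Rightarrow> 'a) \<Rightarrow> 'a \<Rightarrow> bool) \<Rightarrow> 'a set \<Rightarrow> bool" where
  "seq_open S conv U \<longleftrightarrow> U \<subseteq> S \<and>
     (\<forall>a b. (\<forall>n. a n \<in> S) \<and> b \<in> S \<and> conv a b \<and> b \<in> U \<longrightarrow> eventually (\<lambda>n. a n \<in> U) sequentially)"

lemma istopology_seq_open: "istopology (seq_open S conv)"
proof -
  have I: "seq_open S conv (U \<inter> V)" if U: "seq_open S conv U" and V: "seq_open S conv V" for U V
    unfolding seq_open_def
  proof (intro conjI allI impI)
    show "U \<inter> V \<subseteq> S" using U unfolding seq_open_def by blast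
    fix a b assume h: "(\<forall>n. a n \<in> S) \<and> b \<in> S \<and> conv a b \<and> b \<in> U \<inter> V"
    have "eventually (\<lambda>n. a n \<in> U) sequentially" using U h unfolding seq_open_def by blast
    moreover have "eventually (\<lambda>n. a n \<in> V) sequentially" using V h unfolding seq_open_def by blast
    ultimately show "eventually (\<lambda>n. a n \<in> U \<inter> V) sequentially"
      by (simp add: eventually_conj)
  qed
  have UN: "seq_open S conv (\<Union>K)" if K: "\<forall>U\<in>K. seq_open S conv U" for K
    unfolding seq_open_def
  proof (intro conjI allI impI)
    show "\<Union>K \<subseteq> S" using K unfolding seq_open_def by blast
    fix a b assume h: "(\<forall>n. a n \<in> S) \<and> b \<in> S \<and> conv a b \<and> b \<in> \<Union>K"
    then obtain U where U: "U \<in> K" "b \<in> U" by blast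
    with K h have "eventually (\<lambda>n. a n \<in> U) sequentially" unfolding seq_open_def by blast
    then show "eventually (\<lambda>n. a n \<in> \<Union>K) sequentially"
      by (rule eventually_mono) (use U in blast)
  qed
  show ?thesis unfolding istopology_def using I UN by blast
qed

definition seq_topology :: "'a set \<Rightarrow> ((nat \<Rightarrow> 'a) \<Rightarrow> 'a \<Rightarrow> bool) \<Rightarrow> 'a topology" where
  "seq_topology S conv = topology (seq_open S conv)"

abbreviation pow_top :: "'a topology \<Rightarrow> nat \<Rightarrow> (nat \<Rightarrow> 'a) topology" where
  "pow_top T m \<equiv> product_topology (\<lambda>_. T) {..<m}"

text \<open>The space S^\<sqcup>(Y) of finite unordered sequences, realised as finite multisets;
  its topology is the disjoint union over m of the quotient topologies of Y^m modulo the
  symmetric group, i.e. the final topology of the maps Y^m \<rightarrow> multisets,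
  (y_0,...,y_{m-1}) \<mapsto> {#y_0,...,y_{m-1}#}.\<close>
definition mset_open :: "'a topology \<Rightarrow> 'a multiset set \<Rightarrow> bool" where
  "mset_open T U \<longleftrightarrow> U \<subseteq> {M. set_mset M \<subseteq> topspace T} \<and>
     (\<forall>m. openin (pow_top T m) {f \<in> topspace (pow_top T m). mset (map f [0..<m]) \<in> U})"

lemma istopology_mset_open: "istopology (mset_open T)"
  unfolding istopology_def
proof (intro conjI allI impI)
  fix U V assume U: "mset_open T U" and V: "mset_open T V"
  show "mset_open T (U \<inter> V)"
    unfolding mset_open_def
  proof (intro conjI allI)
    show "U \<inter> V \<subseteq> {M. set_mset M \<subseteq> topspace T}" using U unfolding mset_open_def by blast
    fix m
    have "{f \<in> topspace (pow_top T m). mset (map f [0..<m]) \<in> U \<inter> V} =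
          {f \<in> topspace (pow_top T m). mset (map f [0..<m]) \<in> U} \<inter> {f \<in> topspace (pow_top T m). mset (map f [0..<m]) \<in> V}"
      by blast
    then show "openin (pow_top T m) {f \<in> topspace (pow_top T m). mset (map f [0..<m]) \<in> U \<inter> V}"
      using U V unfolding mset_open_def by (simp add: openin_Int)
  qed
next
  fix K assume K: "\<forall>U\<in>K. mset_open T U"
  show "mset_open T (\<Union>K)"
    unfolding mset_open_def
  proof (intro conjI allI)
    show "\<Union>K \<subseteq> {M. set_mset M \<subseteq> topspace T}" using K unfolding mset_open_def by blast
    fix m
    have "{f \<in> topspace (pow_top T m). mset (map f [0..<m]) \<in> \<Union>K} =
          \<Union>((\<lambda>U. {f \<in> topspace (pow_top T m). mset (map f [0..<m]) \<in> U}) ` K)"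
      by blast
    then show "openin (pow_top T m) {f \<in> topspace (pow_top T m). mset (map f [0..<m]) \<in> \<Union>K}"
      using K unfolding mset_open_def by (auto intro!: openin_Union)
  qed
qed

definition mset_topology :: "'a topology \<Rightarrow> 'a multiset topology" where
  "mset_topology T = topology (mset_open T)"

text \<open>X^{k+1}: the histories x[k] = (x(0),...,x(k)), realised as extensional functions on {..k}.\<close>
abbreviation hist_top :: "nat \<Rightarrow> (nat \<Rightarrow> 'x::topological_space) topology" where
  "hist_top k \<equiv> product_topology (\<lambda>_. euclidean) {..k}"

text \<open>A representative of a Y-marked rooted graph: vertex set V (a subset of nat, so countable),
  adjacency relation E, root r, marks y.\<close>
type_synonym 'y rg = "nat set \<times> (nat \<Rightarrow> nat \<Rightarrow> bool) \<times> nat \<times> (nat \<Rightarrow> 'y)"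

primrec gball :: "nat set \<Rightarrow> (nat \<Rightarrow> nat \<Rightarrow> bool) \<Rightarrow> nat \<Rightarrow> nat \<Rightarrow> nat set" where
  "gball V E r 0 = {r}"
| "gball V E r (Suc k) = gball V E r k \<union> {v \<in> V. \<exists>u \<in> gball V E r k. E u v}"

definition valid_rg :: "'y rg \<Rightarrow> bool" where
  "valid_rg g = (case g of (V, E, r, y) \<Rightarrow>
     r \<in> V \<and> (\<forall>u v. E u v \<longrightarrow> u \<in> V \<and> v \<in> V) \<and> (\<forall>u v. E u v \<longrightarrow> E v u) \<and> (\<forall>v. \<not> E v v) \<and>
     (\<forall>v \<in> V. finite {u. E v u}) \<and> V = (\<Union>k. gball V E r k))"

definition rg_iso :: "'y rg \<Rightarrow> 'y rg \<Rightarrow> bool" where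
  "rg_iso g h = (case g of (V, E, r, y) \<Rightarrow> case h of (V', E', r', y') \<Rightarrow>
     (\<exists>\<phi>. bij_betw \<phi> V V' \<and> \<phi> r = r' \<and> (\<forall>u \<in> V. \<forall>v \<in> V. E u v \<longleftrightarrow> E' (\<phi> u) (\<phi> v)) \<and>
          (\<forall>v \<in> V. y' (\<phi> v) = y v)))"

definition rg_class :: "'y rg \<Rightarrow> 'y rg set" where
  "rg_class g = {h. valid_rg h \<and> rg_iso h g}"

definition Gstar :: "'y rg set set" where
  "Gstar = rg_class ` {g. valid_rg g}"

definition ball_iso :: "'y rg \<Rightarrow> 'y rg \<Rightarrow> nat \<Rightarrow> (nat \<Rightarrow> nat) \<Rightarrow> bool" where
  "ball_iso g h k \<phi> = (case g of (V, E, r, y) \<Rightarrow> case h of (V', E', r', y') \<Rightarrow>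
     bij_betw \<phi> (gball V E r k) (gball V' E' r' k) \<and> \<phi> r = r' \<and>
     (\<forall>u \<in> gball V E r k. \<forall>v \<in> gball V E r k. E u v \<longleftrightarrow> E' (\<phi> u) (\<phi> v)))"

definition rg_conv :: "(nat \<Rightarrow> ('y::metric_space) rg) \<Rightarrow> 'y rg \<Rightarrow> bool" where
  "rg_conv gs g \<longleftrightarrow>
     (\<forall>k. \<forall>\<epsilon>>0. \<exists>N. \<forall>n\<ge>N. \<exists>\<phi>. ball_iso (gs n) g k \<phi> \<and>
        (\<forall>v \<in> (case gs n of (V, E, r, y) \<Rightarrow> gball V E r k).
            dist ((snd (snd (snd (gs n)))) v) ((snd (snd (snd g))) (\<phi> v)) < \<epsilon>))"

definition Gconv :: "(nat \<Rightarrow> ('y::metric_space) rg set) \<Rightarrow> 'y rg set \<Rightarrow> bool" where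
  "Gconv cs c \<longleftrightarrow> (\<exists>gs g. (\<forall>n. gs n \<in> cs n) \<and> g \<in> c \<and> rg_conv gs g)"

definition Gtop :: "('y::metric_space) rg set topology" where
  "Gtop = seq_topology Gstar Gconv"

text \<open>traj F V E x \<xi> k v j is X_v(j) for j \<le> k; \<xi> (v,k) is the noise \<xi>_v(k).\<close>
primrec traj :: "(nat \<Rightarrow> (nat \<Rightarrow> 'x) \<Rightarrow> (nat \<Rightarrow> 'x) multiset \<Rightarrow> 'e \<Rightarrow> 'x) \<Rightarrow> nat set \<Rightarrow>
    (nat \<Rightarrow> nat \<Rightarrow> bool) \<Rightarrow> (nat \<Rightarrow> 'x) \<Rightarrow> (nat \<times> nat \<Rightarrow> 'e) \<Rightarrow> nat \<Rightarrow> nat \<Rightarrow> nat \<Rightarrow> 'x" where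
  "traj F V E x \<xi> 0 = (\<lambda>v j. x v)"
| "traj F V E x \<xi> (Suc k) = (\<lambda>v. (traj F V E x \<xi> k v)(Suc k :=
      F k (restrict (traj F V E x \<xi> k v) {..k})
          (image_mset (\<lambda>u. restrict (traj F V E x \<xi> k u) {..k}) (mset_set {u \<in> V. E v u}))
          (\<xi> (v, Suc k))))"

definition proc :: "(nat \<Rightarrow> (nat \<Rightarrow> 'x) \<Rightarrow> (nat \<Rightarrow> 'x) multiset \<Rightarrow> 'e \<Rightarrow> 'x) \<Rightarrow> nat set \<Rightarrow>
    (nat \<Rightarrow> nat \<Rightarrow> bool) \<Rightarrow> (nat \<Rightarrow> 'x) \<Rightarrow> (nat \<times> nat \<Rightarrow> 'e) \<Rightarrow> nat \<Rightarrow> (nat \<Rightarrow> 'x)" where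
  "proc F V E x \<xi> v = (\<lambda>j. traj F V E x \<xi> j v j)"

text \<open>P^{G,x}: law of (G, X^{G,x}) in G_*[X^\<infinity>], the noises being i.i.d. with law \<nu>
  (realised on the canonical product space).\<close>
definition PGx :: "(nat \<Rightarrow> (nat \<Rightarrow> 'x::metric_space) \<Rightarrow> (nat \<Rightarrow> 'x) multiset \<Rightarrow> 'e \<Rightarrow> 'x) \<Rightarrow> 'e measure \<Rightarrow>
    'x rg \<Rightarrow> (nat \<Rightarrow> 'x) rg set measure" where
  "PGx F \<nu> g = (case g of (V, E, r, x) \<Rightarrow>
     distr (Pi\<^sub>M UNIV (\<lambda>_. \<nu>)) (borel_of Gtop) (\<lambda>\<xi>. rg_class (V, E, r, proc F V E x \<xi>)))"

definition Pclass :: "(nat \<Rightarrow> (nat \<Rightarrow> 'x::metric_space) \<Rightarrow> (nat \<Rightarrow> 'x) multiset \<Rightarrow> 'e \<Rightarrow> 'x) \<Rightarrow> 'e measure \<Rightarrow>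
    'x rg set \<Rightarrow> (nat \<Rightarrow> 'x) rg set measure" where
  "Pclass F \<nu> c = PGx F \<nu> (SOME g. g \<in> c)"

definition is_PM :: "(nat \<Rightarrow> (nat \<Rightarrow> 'x::metric_space) \<Rightarrow> (nat \<Rightarrow> 'x) multiset \<Rightarrow> 'e \<Rightarrow> 'x) \<Rightarrow> 'e measure \<Rightarrow>
    'x rg set measure \<Rightarrow> (nat \<Rightarrow> 'x) rg set measure \<Rightarrow> bool" where
  "is_PM F \<nu> M Q \<longleftrightarrow> prob_space Q \<and> sets Q = sets (borel_of Gtop) \<and>
     (\<forall>\<phi>. continuous_map Gtop euclideanreal \<phi> \<and> bounded (\<phi> ` topspace Gtop) \<longrightarrow>
        (\<lambda>c. \<integral>z. \<phi> z \<partial>(Pclass F \<nu> c)) \<in> borel_measurable M \<and>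
        (\<integral>z. \<phi> z \<partial>Q) = (\<integral>c. (\<integral>z. \<phi> z \<partial>(Pclass F \<nu> c)) \<partial>M))"

definition PM :: "(nat \<Rightarrow> (nat \<Rightarrow> 'x::metric_space) \<Rightarrow> (nat \<Rightarrow> 'x) multiset \<Rightarrow> 'e \<Rightarrow> 'x) \<Rightarrow> 'e measure \<Rightarrow>
    'x rg set measure \<Rightarrow> (nat \<Rightarrow> 'x) rg set measure" where
  "PM F \<nu> M = (THE Q. is_PM F \<nu> M Q)"

end

theory Submission
  imports Defs
begin

text \<open>
  (i) Local convergence of \<open>(G\<^sub>n, x\<^sup>n)\<close> to \<open>(G, x)\<close> yields isomorphisms \<open>\<psi>\<^sub>n\<close> from balls of \<open>G\<close>
  of radii \<open>L\<^sub>n \<rightarrow> \<infinity>\<close> into \<open>G\<^sub>n\<close> along which the marks converge. Extend \<open>\<psi>\<^sub>n\<close> to a bijection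
  of all vertices and let vertex \<open>\<psi>\<^sub>n v\<close> of \<open>G\<^sub>n\<close> use the noise of \<open>v\<close>: as the noises are i.i.d., this does
  not change the law of the process on \<open>G\<^sub>n\<close>. Each update is a continuous function of the own
  history, the multiset of the neighbours' histories and the noise, so induction on time shows that
  the coupled processes converge locally for every realisation of the noise, and dominated
  convergence turns this into weak convergence.

  (ii) By (i) the kernel \<open>c \<mapsto> P\<^sup>c\<close> is weakly continuous, so \<open>P[M]\<close> is the mixture \<open>M \<bind> P\<^sup>c\<close>, and
  weak convergence \<open>M\<^sub>n \<rightarrow> M\<close> applied to \<open>c \<mapsto> \<integral>\<phi> dP\<^sup>c\<close> gives \<open>P[M\<^sub>n] \<rightarrow> P[M]\<close>. Uniqueness of \<open>P[M]\<close> and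
  measurability of the kernel come from a pseudometric inducing the local topology: with it the
  indicator of an open set is an increasing limit of continuous functions with values in \<open>[0, 1]\<close>.
\<close>

section \<open>Sequential topologies and their Borel sets\<close>

lemma openin_seq_topology: "openin (seq_topology S conv) U \<longleftrightarrow> seq_open S conv U"
  unfolding seq_topology_def using istopology_seq_open topology_inverse' by metis

lemma topspace_seq_topology [simp]: "topspace (seq_topology S conv) = S"
proof -
  have "seq_open S conv S"
    unfolding seq_open_def by auto
  then show ?thesis
    unfolding topspace_def openin_seq_topology seq_open_def by blast
qed

lemma limitin_seq_topology:
  assumes "\<And>n. xs n \<in> S" "x \<in> S" "conv xs x"
  shows "limitin (seq_topology S conv) xs x sequentially"
  using assms unfolding limitin_def openin_seq_topology seq_open_def by auto

lemma continuous_map_seq_topology: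
  fixes f :: "'a \<Rightarrow> 'b::topological_space"
  assumes "\<And>xs x. (\<And>n. xs n \<in> S) \<Longrightarrow> x \<in> S \<Longrightarrow> conv xs x \<Longrightarrow> (\<lambda>n. f (xs n)) \<longlonglongrightarrow> f x"
  shows "continuous_map (seq_topology S conv) euclidean f"
  unfolding continuous_map_def
proof (intro conjI allI impI)
  fix V :: "'b set" assume "openin euclidean V"
  then have "open V" by simp
  have "eventually (\<lambda>n. f (xs n) \<in> V) sequentially"
    if "\<And>n. xs n \<in> S" "x \<in> S" "conv xs x" "f x \<in> V" for xs x
    using assms[OF that(1-3)] \<open>open V\<close> that(4) by (rule topological_tendstoD)
  then show "openin (seq_topology S conv) {x \<in> topspace (seq_topology S conv). f x \<in> V}"
    unfolding openin_seq_topology seq_open_def topspace_seq_topology by auto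
qed simp

lemma continuous_map_into_seq_topology:
  fixes f :: "'a::first_countable_topology \<Rightarrow> 'b"
  assumes "\<And>x. f x \<in> S"
    and "\<And>xs x. xs \<longlonglongrightarrow> x \<Longrightarrow> conv (\<lambda>n. f (xs n)) (f x)"
  shows "continuous_map euclidean (seq_topology S conv) f"
  unfolding continuous_map_def
proof (intro conjI allI impI)
  fix U :: "'b set" assume "openin (seq_topology S conv) U"
  then have "closed (- (f -` U))"
    using assms unfolding closed_sequential_limits openin_seq_topology seq_open_def
    by (metis ComplD ComplI eventually_happens' sequentially_bot vimageE vimageI)
  then show "openin euclidean {x \<in> topspace euclidean. f x \<in> U}"
    by (simp add: closed_def vimage_def)
qed (use assms in auto)

lemma space_borel_of: "space (borel_of T) = topspace T"
  unfolding borel_of_def by (rule space_measure_of) (auto dest: openin_subset)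

lemma sets_borel_of: "sets (borel_of T) = sigma_sets (topspace T) {U. openin T U}"
  unfolding borel_of_def by (rule sets_measure_of) (auto dest: openin_subset)

lemma continuous_map_measurable_borel_of:
  fixes f :: "'a \<Rightarrow> 'b::topological_space"
  assumes "continuous_map T euclidean f"
  shows "f \<in> borel_measurable (borel_of T)"
proof (rule borel_measurableI)
  fix S :: "'b set" assume "open S"
  then have "openin T {x \<in> topspace T. f x \<in> S}"
    using assms by (simp add: continuous_map_def)
  then show "f -` S \<inter> space (borel_of T) \<in> sets (borel_of T)"
    by (auto simp: space_borel_of sets_borel_of Int_commute Collect_conj_eq vimage_def)
qed

lemma continuous_map_measurable_into_borel_of:
  assumes "continuous_map euclidean T f"
  shows "f \<in> measurable borel (borel_of T)"
  unfolding borel_of_def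
proof (rule measurable_measure_of)
  show "f -` U \<inter> space borel \<in> sets borel" if "U \<in> {U. openin T U}" for U
    using that assms by (auto simp: continuous_map_def vimage_def)
qed (use assms in \<open>auto dest: openin_subset simp: continuous_map_def\<close>)

section \<open>Borel measures and bounded continuous functions\<close>

definition open_indicators_continuous_sup :: "'a topology \<Rightarrow> bool" where
  "open_indicators_continuous_sup T \<longleftrightarrow>
     (\<forall>U. openin T U \<longrightarrow> (\<exists>f. incseq f \<and> (\<forall>n. continuous_map T euclideanreal (f n)) \<and>
        (\<forall>n x. 0 \<le> f n x \<and> f n x \<le> 1) \<and>
        (\<forall>x\<in>topspace T. (SUP n. ennreal (f n x)) = indicator U x)))"

lemma emeasure_open_eq_SUP_integral:
  fixes f :: "nat \<Rightarrow> 'a \<Rightarrow> real"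
  assumes Q: "finite_measure Q" "sets Q = sets (borel_of T)" and U: "openin T U"
    and f: "incseq f" "\<And>n. continuous_map T euclideanreal (f n)" "\<And>n x. 0 \<le> f n x" "\<And>n x. f n x \<le> 1"
    and SUP_f: "\<And>x. x \<in> topspace T \<Longrightarrow> (SUP n. ennreal (f n x)) = indicator U x"
  shows "emeasure Q U = (SUP n. ennreal (\<integral>x. f n x \<partial>Q))"
proof -
  interpret finite_measure Q by (rule Q(1))
  have space_Q: "space Q = topspace T"
    using sets_eq_imp_space_eq[OF Q(2)] by (simp add: space_borel_of)
  have "U \<in> sets Q"
    using Q(2) U by (auto simp: sets_borel_of)
  have meas: "f n \<in> borel_measurable Q" for n
    using continuous_map_measurable_borel_of[OF f(2)] measurable_cong_sets[OF Q(2) refl] by blast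
  have int: "integrable Q (f n)" for n
    using f(3,4) by (intro integrable_const_bound[where B=1] meas) simp
  have "emeasure Q U = (\<integral>\<^sup>+x. indicator U x \<partial>Q)"
    using \<open>U \<in> sets Q\<close> by simp
  also have "\<dots> = (\<integral>\<^sup>+x. (SUP n. ennreal (f n x)) \<partial>Q)"
    by (rule nn_integral_cong) (simp add: SUP_f space_Q)
  also have "\<dots> = (SUP n. \<integral>\<^sup>+x. ennreal (f n x) \<partial>Q)"
    using f(1) meas by (intro nn_integral_monotone_convergence_SUP) (auto simp: incseq_def le_fun_def intro: ennreal_leI)
  also have "\<dots> = (SUP n. ennreal (\<integral>x. f n x \<partial>Q))"
    using int f(3) by (simp add: nn_integral_eq_integral)
  finally show ?thesis .
qed

lemma bounded_image_unit_interval: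
  fixes f :: "'a \<Rightarrow> real"
  assumes "\<And>x. 0 \<le> f x" "\<And>x. f x \<le> 1"
  shows "bounded (f ` A)"
  using assms by (intro boundedI[where B=1]) auto

lemma finite_measure_eq_if_integrals_eq:
  assumes T: "open_indicators_continuous_sup T"
    and Q1: "finite_measure Q1" "sets Q1 = sets (borel_of T)"
    and Q2: "finite_measure Q2" "sets Q2 = sets (borel_of T)"
    and eq: "\<And>\<phi>. continuous_map T euclideanreal \<phi> \<Longrightarrow> bounded (\<phi> ` topspace T) \<Longrightarrow>
                (\<integral>z. \<phi> z \<partial>Q1) = (\<integral>z. \<phi> z \<partial>Q2)"
  shows "Q1 = Q2"
proof (rule measure_eqI_generator_eq[where E="{U. openin T U}" and \<Omega>="topspace T" and A="\<lambda>_. topspace T"])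
  fix U assume "U \<in> {U. openin T U}"
  then obtain f where U: "openin T U" and f: "incseq f" "\<And>n. continuous_map T euclideanreal (f n)"
      "\<And>n x. 0 \<le> f n x" "\<And>n x. f n x \<le> 1"
      "\<And>x. x \<in> topspace T \<Longrightarrow> (SUP n. ennreal (f n x)) = indicator U x"
    using T unfolding open_indicators_continuous_sup_def by auto
  have "(\<integral>x. f n x \<partial>Q1) = (\<integral>x. f n x \<partial>Q2)" for n
    using f by (intro eq bounded_image_unit_interval) auto
  then show "emeasure Q1 U = emeasure Q2 U"
    by (simp add: emeasure_open_eq_SUP_integral[OF Q1 U f] emeasure_open_eq_SUP_integral[OF Q2 U f])
next
  show "emeasure Q1 (topspace T) \<noteq> \<infinity>" for i
    using finite_measure.emeasure_finite[OF Q1(1)] by simp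
qed (auto simp: Int_stable_def sets_borel_of Q1(2) Q2(2) dest: openin_subset)

lemma measurable_prob_algebra_if_integrals_measurable:
  assumes T: "open_indicators_continuous_sup T"
    and K: "\<And>c. c \<in> space M \<Longrightarrow> prob_space (K c)" "\<And>c. c \<in> space M \<Longrightarrow> sets (K c) = sets (borel_of T)"
    and meas: "\<And>\<phi>. continuous_map T euclideanreal \<phi> \<Longrightarrow> bounded (\<phi> ` topspace T) \<Longrightarrow>
                (\<lambda>c. \<integral>z. \<phi> z \<partial>K c) \<in> borel_measurable M"
  shows "K \<in> measurable M (prob_algebra (borel_of T))"
proof (rule measurable_prob_algebra_generated[where G="{U. openin T U}" and \<Omega>="topspace T"])
  fix U assume "U \<in> {U. openin T U}"
  then obtain f where U: "openin T U" and f: "incseq f" "\<And>n. continuous_map T euclideanreal (f n)"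
      "\<And>n x. 0 \<le> f n x" "\<And>n x. f n x \<le> 1"
      "\<And>x. x \<in> topspace T \<Longrightarrow> (SUP n. ennreal (f n x)) = indicator U x"
    using T unfolding open_indicators_continuous_sup_def by auto
  have "(\<lambda>c. \<integral>x. f n x \<partial>K c) \<in> borel_measurable M" for n
    using f by (intro meas bounded_image_unit_interval) auto
  then have "(\<lambda>c. SUP n. ennreal (\<integral>x. f n x \<partial>K c)) \<in> borel_measurable M"
    by measurable
  then show "(\<lambda>c. emeasure (K c) U) \<in> borel_measurable M"
    using emeasure_open_eq_SUP_integral[OF prob_space.finite_measure[OF K(1)] K(2) U f]
    by (subst measurable_cong) auto
qed (use K in \<open>auto simp: Int_stable_def sets_borel_of dest: openin_subset\<close>)

lemma (in prob_space) abs_integral_le_const: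
  fixes f :: "'a \<Rightarrow> real"
  assumes "f \<in> borel_measurable M" "\<And>x. x \<in> space M \<Longrightarrow> \<bar>f x\<bar> \<le> B"
  shows "\<bar>\<integral>x. f x \<partial>M\<bar> \<le> B"
proof -
  have int: "integrable M f"
    using assms by (intro integrable_const_bound[where B=B]) auto
  have bounds: "- B \<le> f x" "f x \<le> B" if "x \<in> space M" for x
    using assms(2)[OF that] by arith+
  have "(\<integral>x. f x \<partial>M) \<le> B"
    using bounds by (intro integral_le_const[OF int] AE_I2)
  moreover have "- B \<le> (\<integral>x. f x \<partial>M)"
    using bounds by (intro integral_ge_const[OF int] AE_I2)
  ultimately show ?thesis
    by simp
qed

lemma weak_conv_top_distr_if_limitin:
  assumes P: "prob_space P"
    and meas: "\<And>n. X n \<in> measurable P (borel_of T)" "Y \<in> measurable P (borel_of T)"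
    and lim: "\<And>\<omega>. \<omega> \<in> space P \<Longrightarrow> limitin T (\<lambda>n. X n \<omega>) (Y \<omega>) sequentially"
  shows "weak_conv_top T (\<lambda>n. distr P (borel_of T) (X n)) (distr P (borel_of T) Y)"
  unfolding weak_conv_top_def
proof (intro allI impI, elim conjE)
  interpret prob_space P by (rule P)
  fix \<phi> assume cont: "continuous_map T euclideanreal \<phi>" and "bounded (\<phi> ` topspace T)"
  then obtain B where B: "\<And>z. z \<in> topspace T \<Longrightarrow> \<bar>\<phi> z\<bar> \<le> B"
    unfolding bounded_iff by auto
  have \<phi>: "\<phi> \<in> borel_measurable (borel_of T)"
    using cont by (rule continuous_map_measurable_borel_of)
  have "(\<lambda>n. \<integral>\<omega>. \<phi> (X n \<omega>) \<partial>P) \<longlonglongrightarrow> (\<integral>\<omega>. \<phi> (Y \<omega>) \<partial>P)"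
  proof (rule integral_dominated_convergence[where w="\<lambda>_. B"])
    show "AE \<omega> in P. (\<lambda>n. \<phi> (X n \<omega>)) \<longlonglongrightarrow> \<phi> (Y \<omega>)"
      using continuous_map_limit[OF cont lim] by (simp add: o_def)
    show "AE \<omega> in P. norm (\<phi> (X n \<omega>)) \<le> B" for n
      using B measurable_space[OF meas(1)] by (simp add: space_borel_of)
  qed (use \<phi> meas in simp_all)
  then show "(\<lambda>n. \<integral>z. \<phi> z \<partial>distr P (borel_of T) (X n)) \<longlonglongrightarrow> (\<integral>z. \<phi> z \<partial>distr P (borel_of T) Y)"
    using \<phi> meas by (simp add: integral_distr)
qed

locale seq_pseudometric =
  fixes S :: "'a set" and conv :: "(nat \<Rightarrow> 'a) \<Rightarrow> 'a \<Rightarrow> bool" and d :: "'a \<Rightarrow> 'a \<Rightarrow> real"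
  assumes nonneg: "0 \<le> d a b"
    and self: "d a a = 0"
    and sym: "d a b = d b a"
    and triangle: "a \<in> S \<Longrightarrow> b \<in> S \<Longrightarrow> c \<in> S \<Longrightarrow> d a c \<le> d a b + d b c"
    and conv_iff: "(\<And>n. xs n \<in> S) \<Longrightarrow> x \<in> S \<Longrightarrow> conv xs x \<longleftrightarrow> (\<lambda>n. d (xs n) x) \<longlonglongrightarrow> 0"
begin

definition dist_compl :: "'a set \<Rightarrow> 'a \<Rightarrow> real" where
  "dist_compl U a = Inf (insert 1 (d a ` (S - U)))"

lemma bdd_below_dists: "bdd_below (insert 1 (d a ` A))"
  using nonneg by (intro bdd_belowI[of _ 0]) auto

lemma dist_compl_nonneg: "0 \<le> dist_compl U a"
  unfolding dist_compl_def using nonneg by (intro cInf_greatest) auto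

lemma dist_compl_le_1: "dist_compl U a \<le> 1"
  unfolding dist_compl_def by (intro cInf_lower bdd_below_dists) simp

lemma dist_compl_le_dist: "b \<in> S - U \<Longrightarrow> dist_compl U a \<le> d a b"
  unfolding dist_compl_def by (intro cInf_lower bdd_below_dists) simp

lemma dist_compl_lipschitz:
  assumes "a \<in> S" "a' \<in> S"
  shows "dist_compl U a \<le> d a a' + dist_compl U a'"
proof -
  have "dist_compl U a - d a a' \<le> s" if "s \<in> insert 1 (d a' ` (S - U))" for s
  proof (cases "s = 1")
    case True
    then show ?thesis using dist_compl_le_1[of U a] nonneg[of a a'] by simp
  next
    case False
    with that obtain b where b: "b \<in> S - U" "s = d a' b" by blast
    have "dist_compl U a \<le> d a b" using b(1) by (rule dist_compl_le_dist)
    also have "\<dots> \<le> d a a' + d a' b" using assms b(1) by (intro triangle) auto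
    finally show ?thesis using b(2) by simp
  qed
  then have "dist_compl U a - d a a' \<le> dist_compl U a'"
    unfolding dist_compl_def[of U a'] by (intro cInf_greatest) auto
  then show ?thesis by simp
qed

lemma continuous_map_dist_compl: "continuous_map (seq_topology S conv) euclideanreal (dist_compl U)"
proof (rule continuous_map_seq_topology)
  fix xs x assume xs: "\<And>n. xs n \<in> S" and x: "x \<in> S" and "conv xs x"
  then have lim: "(\<lambda>n. d (xs n) x) \<longlonglongrightarrow> 0" using conv_iff by blast
  have "\<bar>dist_compl U (xs n) - dist_compl U x\<bar> \<le> d (xs n) x" for n
    using dist_compl_lipschitz[OF xs[of n] x, of U] dist_compl_lipschitz[OF x xs[of n], of U]
      sym[of x "xs n"] by linarith
  then have "(\<lambda>n. dist_compl U (xs n) - dist_compl U x) \<longlonglongrightarrow> 0"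
    by (intro Lim_null_comparison[OF _ lim] always_eventually) simp
  then show "(\<lambda>n. dist_compl U (xs n)) \<longlonglongrightarrow> dist_compl U x"
    by (rule LIM_zero_cancel)
qed

lemma dist_compl_pos:
  assumes U: "openin (seq_topology S conv) U" and a: "a \<in> U"
  shows "0 < dist_compl U a"
proof (rule ccontr)
  assume "\<not> 0 < dist_compl U a"
  then have "\<exists>b. b \<in> S - U \<and> d a b < 1 / Suc n" for n
  proof -
    have "Inf (insert 1 (d a ` (S - U))) < 1 / Suc n"
      using \<open>\<not> 0 < dist_compl U a\<close> unfolding dist_compl_def
      by (smt (verit) of_nat_0_less_iff zero_less_Suc divide_pos_pos)
    then obtain s where "s \<in> insert 1 (d a ` (S - U))" "s < 1 / Suc n"
      by (meson cInf_lessD insert_not_empty)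
    moreover have "1 / real (Suc n) \<le> 1" by simp
    ultimately show ?thesis by auto
  qed
  then obtain bs where bs: "\<And>n. bs n \<in> S - U" "\<And>n. d a (bs n) < 1 / Suc n"
    by metis
  have "a \<in> S" using U a by (auto simp: openin_seq_topology seq_open_def)
  have "(\<lambda>n. d (bs n) a) \<longlonglongrightarrow> 0"
  proof (rule Lim_null_comparison)
    show "\<forall>\<^sub>F n in sequentially. norm (d (bs n) a) \<le> 1 / Suc n"
      using bs(2) sym nonneg by (intro always_eventually) (simp add: less_imp_le)
  qed (rule LIMSEQ_inverse_real_of_nat[unfolded inverse_eq_divide])
  then have "conv bs a" using conv_iff bs(1) \<open>a \<in> S\<close> by blast
  then have "eventually (\<lambda>n. bs n \<in> U) sequentially"
    using U a bs(1) \<open>a \<in> S\<close> unfolding openin_seq_topology seq_open_def by blast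
  then show False using bs(1) by (auto dest: eventually_happens)
qed

lemma open_indicators_continuous_sup_seq_topology: "open_indicators_continuous_sup (seq_topology S conv)"
  unfolding open_indicators_continuous_sup_def
proof (intro allI impI)
  fix U assume U: "openin (seq_topology S conv) U"
  define f where "f n a = min 1 (real n * dist_compl U a)" for n a
  have "incseq f"
    unfolding incseq_def le_fun_def f_def using dist_compl_nonneg
    by (intro allI impI min.mono order_refl mult_right_mono) auto
  moreover have "continuous_map (seq_topology S conv) euclideanreal (f n)" for n
    unfolding f_def by (intro continuous_intros continuous_map_dist_compl)
  moreover have "0 \<le> f n a \<and> f n a \<le> 1" for n a
    using dist_compl_nonneg by (simp add: f_def)
  moreover have "(SUP n. ennreal (f n a)) = indicator U a" if a: "a \<in> S" for a
  proof (cases "a \<in> U")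
    case True
    obtain n :: nat where "1 / dist_compl U a \<le> n"
      using real_nat_ceiling_ge by blast
    then have "f n a = 1"
      using dist_compl_pos[OF U True] by (simp add: f_def field_simps)
    then have "1 \<le> (SUP n. ennreal (f n a))"
      by (metis ennreal_1 SUP_upper UNIV_I)
    moreover have "(SUP n. ennreal (f n a)) \<le> 1"
      by (auto simp: f_def intro!: SUP_least)
    ultimately show ?thesis using True by simp
  next
    case False
    then have "dist_compl U a = 0"
      using dist_compl_le_dist[of a U a] dist_compl_nonneg[of U a] a self by simp
    then show ?thesis using False by (simp add: f_def)
  qed
  ultimately show "\<exists>f. incseq f \<and> (\<forall>n. continuous_map (seq_topology S conv) euclideanreal (f n)) \<and>
      (\<forall>n x. 0 \<le> f n x \<and> f n x \<le> 1) \<and>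
      (\<forall>x\<in>topspace (seq_topology S conv). (SUP n. ennreal (f n x)) = indicator U x)"
    by auto
qed

end

section \<open>Topologies of finite multisets and of function spaces\<close>

lemma openin_mset_topology: "openin (mset_topology T) U \<longleftrightarrow> mset_open T U"
  unfolding mset_topology_def using istopology_mset_open topology_inverse' by metis

lemma mset_list_in_topspace:
  "f \<in> topspace (pow_top T m) \<Longrightarrow> set_mset (mset (map f [0..<m])) \<subseteq> topspace T"
  by (auto simp: topspace_product_topology PiE_iff)

lemma topspace_mset_topology: "topspace (mset_topology T) = {M. set_mset M \<subseteq> topspace T}"
proof -
  have "mset_open T {M. set_mset M \<subseteq> topspace T}"
    unfolding mset_open_def
  proof (intro conjI allI)
    fix m
    have "topspace (pow_top T m) \<subseteq> {f. mset (map f [0..<m]) \<in> {M. set_mset M \<subseteq> topspace T}}"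
      using mset_list_in_topspace by (intro subsetI) (simp only: mem_Collect_eq)
    then have "{f \<in> topspace (pow_top T m). mset (map f [0..<m]) \<in> {M. set_mset M \<subseteq> topspace T}} =
        topspace (pow_top T m)"
      by (simp only: Collect_conj_eq Collect_mem_eq Int_absorb2)
    then show "openin (pow_top T m)
        {f \<in> topspace (pow_top T m). mset (map f [0..<m]) \<in> {M. set_mset M \<subseteq> topspace T}}"
      by (simp only: openin_topspace)
  qed simp
  then have "{M. set_mset M \<subseteq> topspace T} \<subseteq> topspace (mset_topology T)"
    unfolding openin_mset_topology[symmetric] by (rule openin_subset)
  moreover have "topspace (mset_topology T) \<subseteq> {M. set_mset M \<subseteq> topspace T}"
    unfolding topspace_def openin_mset_topology mset_open_def by (rule Union_least) blast
  ultimately show ?thesis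
    by (rule antisym[rotated])
qed

lemma continuous_map_mset_list:
  "continuous_map (pow_top T m) (mset_topology T) (\<lambda>f. mset (map f [0..<m]))"
  unfolding continuous_map_def
proof (intro conjI allI impI)
  show "(\<lambda>f. mset (map f [0..<m])) \<in> topspace (pow_top T m) \<rightarrow> topspace (mset_topology T)"
    unfolding topspace_mset_topology Pi_def mem_Collect_eq using mset_list_in_topspace by blast
  show "openin (pow_top T m) {f \<in> topspace (pow_top T m). mset (map f [0..<m]) \<in> U}"
    if "openin (mset_topology T) U" for U
    using that unfolding openin_mset_topology mset_open_def by blast
qed

lemma limitin_mset_topology_image_mset:
  assumes "finite N"
    and "\<And>n u. u \<in> N \<Longrightarrow> f n u \<in> topspace T"
    and "\<And>u. u \<in> N \<Longrightarrow> limitin T (\<lambda>n. f n u) (l u) F"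
  shows "limitin (mset_topology T) (\<lambda>n. image_mset (f n) (mset_set N)) (image_mset l (mset_set N)) F"
proof -
  obtain L where L: "distinct L" "set L = N"
    using finite_distinct_list[OF assms(1)] by blast
  define m where "m = length L"
  have L_nth: "L ! i \<in> N" if "i < m" for i
    using that L(2) nth_mem unfolding m_def by blast
  have image_mset_eq: "image_mset h (mset_set N) = mset (map (restrict (\<lambda>i. h (L ! i)) {..<m}) [0..<m])"
    for h
  proof -
    have "mset_set N = mset L"
      using L by (metis mset_set_set)
    then have "image_mset h (mset_set N) = mset (map h (map (\<lambda>i. L ! i) [0..<m]))"
      by (simp add: map_nth m_def)
    also have "\<dots> = mset (map (restrict (\<lambda>i. h (L ! i)) {..<m}) [0..<m])"
      by (intro arg_cong[where f=mset]) auto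
    finally show ?thesis .
  qed
  have "limitin (pow_top T m) (\<lambda>n. restrict (\<lambda>i. f n (L ! i)) {..<m}) (restrict (\<lambda>i. l (L ! i)) {..<m}) F"
    unfolding limitin_componentwise
    using assms(2,3) L_nth by (auto simp: topspace_product_topology PiE_iff)
  from continuous_map_limit[OF continuous_map_mset_list this]
  show ?thesis
    unfolding image_mset_eq comp_def .
qed

lemma limitin_hist_top:
  assumes "\<And>i. i \<le> j \<Longrightarrow> ((\<lambda>n. f n i) \<longlongrightarrow> l i) F"
  shows "limitin (hist_top j) (\<lambda>n. restrict (f n) {..j}) (restrict l {..j}) F"
  unfolding limitin_componentwise
  using assms by (auto simp: topspace_product_topology PiE_iff)

lemma tendsto_fun_iff:
  fixes f :: "'a \<Rightarrow> 'i \<Rightarrow> 'b::topological_space"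
  shows "(f \<longlongrightarrow> l) F \<longleftrightarrow> (\<forall>i. ((\<lambda>n. f n i) \<longlongrightarrow> l i) F)"
proof -
  have "(f \<longlongrightarrow> l) F \<longleftrightarrow> limitin (product_topology (\<lambda>i. euclidean) UNIV) f l F"
    by (simp add: euclidean_product_topology)
  then show ?thesis
    by (simp add: limitin_componentwise)
qed

section \<open>Balls of rooted graphs\<close>

definition rg_ball :: "'y rg \<Rightarrow> nat \<Rightarrow> nat set" where
  "rg_ball g k = (case g of (V, E, r, y) \<Rightarrow> gball V E r k)"

definition rg_marks :: "'y rg \<Rightarrow> nat \<Rightarrow> 'y" where
  "rg_marks g = snd (snd (snd g))"

lemma rg_ball_simp [simp]: "rg_ball (V, E, r, y) k = gball V E r k"
  by (simp add: rg_ball_def)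

lemma rg_marks_simp [simp]: "rg_marks (V, E, r, y) = y"
  by (simp add: rg_marks_def)

lemma root_in_gball: "r \<in> gball V E r k"
  by (induction k) auto

lemma gball_mono: "j \<le> k \<Longrightarrow> gball V E r j \<subseteq> gball V E r k"
  by (induction k) (auto simp: le_Suc_eq)

lemma rg_ball_mono: "j \<le> k \<Longrightarrow> rg_ball g j \<subseteq> rg_ball g k"
  by (cases g) (auto dest: gball_mono)

lemma gball_subset: "r \<in> V \<Longrightarrow> gball V E r k \<subseteq> V"
  by (induction k) auto

lemma valid_rgD:
  assumes "valid_rg (V, E, r, y)"
  shows "r \<in> V" "\<And>u v. E u v \<Longrightarrow> v \<in> V" "\<And>v. v \<in> V \<Longrightarrow> finite {u. E v u}"
    "\<And>v. v \<in> V \<Longrightarrow> \<exists>k. v \<in> gball V E r k"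
  using assms unfolding valid_rg_def by auto

lemma valid_rg_marks_irrelevant: "valid_rg (V, E, r, y) \<longleftrightarrow> valid_rg (V, E, r, z)"
  by (simp add: valid_rg_def)

lemma finite_gball:
  assumes "valid_rg (V, E, r, y)"
  shows "finite (gball V E r k)"
proof (induction k)
  case (Suc k)
  have "gball V E r (Suc k) \<subseteq> gball V E r k \<union> (\<Union>u\<in>gball V E r k. {v. E u v})"
    by auto
  moreover have "finite (\<Union>u\<in>gball V E r k. {v. E u v})"
    using Suc valid_rgD[OF assms] gball_subset by blast
  ultimately show ?case
    using Suc by (auto intro: finite_subset)
qed simp

text \<open>Used with \<open>A\<close> the \<open>k\<close>-ball for isomorphisms of balls and with \<open>A = V\<close> for isomorphisms of
  whole graphs.\<close>

lemma image_gball_eq: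
  assumes g: "valid_rg (V, E, r, y)" and h: "valid_rg (V', E', r', y')"
    and bij: "bij_betw \<phi> A A'" and A: "gball V E r k \<subseteq> A" and A': "gball V' E' r' k \<subseteq> A'"
    and root: "\<phi> r = r'" and edges: "\<forall>u\<in>A. \<forall>v\<in>A. E u v \<longleftrightarrow> E' (\<phi> u) (\<phi> v)"
    and "j \<le> k"
  shows "\<phi> ` gball V E r j = gball V' E' r' j"
  using \<open>j \<le> k\<close>
proof (induction j)
  case (Suc j)
  have IH: "\<phi> ` gball V E r j = gball V' E' r' j"
    using Suc by simp
  have AS: "gball V E r (Suc j) \<subseteq> A" and AS': "gball V' E' r' (Suc j) \<subseteq> A'"
    using Suc.prems gball_mono A A' by blast+
  show ?case
  proof (intro equalityI subsetI)
    fix w assume "w \<in> \<phi> ` gball V E r (Suc j)"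
    then obtain v where v: "v \<in> gball V E r (Suc j)" "w = \<phi> v" by blast
    show "w \<in> gball V' E' r' (Suc j)"
    proof (cases "v \<in> gball V E r j")
      case False
      then obtain u where u: "u \<in> gball V E r j" "E u v"
        using v by auto
      moreover have "u \<in> A" "v \<in> A"
        using u v AS by auto
      ultimately have "E' (\<phi> u) w"
        using edges v(2) by blast
      then show ?thesis
        using IH u valid_rgD(2)[OF h] by auto
    qed (use IH v in auto)
  next
    fix w assume w: "w \<in> gball V' E' r' (Suc j)"
    show "w \<in> \<phi> ` gball V E r (Suc j)"
    proof (cases "w \<in> gball V' E' r' j")
      case False
      then obtain u' where u': "u' \<in> gball V' E' r' j" "E' u' w"
        using w by auto
      then obtain u where u: "u \<in> gball V E r j" "E' (\<phi> u) w"
        using IH by (metis imageE)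
      obtain v where v: "v \<in> A" "w = \<phi> v"
        using w AS' bij by (auto simp: bij_betw_def)
      have "u \<in> A"
        using u AS by auto
      then have "E u v"
        using edges u v by blast
      then show ?thesis
        using u v valid_rgD(2)[OF g] by auto
    qed (use IH gball_mono[of j "Suc j"] in auto)
  qed
qed (use root in simp)

lemma ball_iso_simp:
  "ball_iso (V, E, r, y) (V', E', r', y') k \<phi> \<longleftrightarrow>
     bij_betw \<phi> (gball V E r k) (gball V' E' r' k) \<and> \<phi> r = r' \<and>
     (\<forall>u \<in> gball V E r k. \<forall>v \<in> gball V E r k. E u v \<longleftrightarrow> E' (\<phi> u) (\<phi> v))"
  by (simp add: ball_iso_def)

lemma ball_iso_marks_irrelevant:
  "ball_iso (V, E, r, y) (V', E', r', y') k \<phi> \<longleftrightarrow> ball_iso (V, E, r, z) (V', E', r', z') k \<phi>"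
  by (simp add: ball_iso_simp)

lemma ball_iso_bij_betw: "ball_iso g h k \<phi> \<Longrightarrow> bij_betw \<phi> (rg_ball g k) (rg_ball h k)"
  by (cases g; cases h) (simp add: ball_iso_simp)

lemma ball_iso_id: "ball_iso g g k id"
  by (cases g) (simp add: ball_iso_simp)

lemma ball_iso_mono:
  assumes g: "valid_rg g" and h: "valid_rg h" and iso: "ball_iso g h k \<phi>" and "j \<le> k"
  shows "ball_iso g h j \<phi>"
proof -
  obtain V E r y V' E' r' y' where gh: "g = (V, E, r, y)" "h = (V', E', r', y')"
    by (cases g; cases h) auto
  have iso': "bij_betw \<phi> (gball V E r k) (gball V' E' r' k)" "\<phi> r = r'"
    "\<forall>u \<in> gball V E r k. \<forall>v \<in> gball V E r k. E u v \<longleftrightarrow> E' (\<phi> u) (\<phi> v)"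
    using iso by (simp_all add: gh ball_iso_simp)
  have "\<phi> ` gball V E r j = gball V' E' r' j"
    using g h iso' \<open>j \<le> k\<close>
    by (intro image_gball_eq[where A="gball V E r k" and A'="gball V' E' r' k"]) (simp_all add: gh)
  moreover have "gball V E r j \<subseteq> gball V E r k"
    using \<open>j \<le> k\<close> by (rule gball_mono)
  moreover have "inj_on \<phi> (gball V E r j)"
    using iso'(1) calculation(2) by (auto simp: bij_betw_def intro: inj_on_subset)
  ultimately show ?thesis
    using iso'(2,3) by (simp add: gh ball_iso_simp bij_betw_def subset_iff)
qed

lemma ball_iso_inv:
  assumes "ball_iso g h k \<phi>"
  shows "ball_iso h g k (inv_into (rg_ball g k) \<phi>)"
proof -
  obtain V E r y V' E' r' y' where gh: "g = (V, E, r, y)" "h = (V', E', r', y')"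
    by (cases g; cases h) auto
  let ?\<psi> = "inv_into (gball V E r k) \<phi>"
  have iso: "bij_betw \<phi> (gball V E r k) (gball V' E' r' k)" "\<phi> r = r'"
    "\<forall>u \<in> gball V E r k. \<forall>v \<in> gball V E r k. E u v \<longleftrightarrow> E' (\<phi> u) (\<phi> v)"
    using assms by (simp_all add: gh ball_iso_simp)
  have "bij_betw ?\<psi> (gball V' E' r' k) (gball V E r k)"
    using iso(1) by (rule bij_betw_inv_into)
  moreover have "?\<psi> r' = r"
    using iso root_in_gball by (metis bij_betw_inv_into_left)
  moreover have "E' u v \<longleftrightarrow> E (?\<psi> u) (?\<psi> v)"
    if "u \<in> gball V' E' r' k" "v \<in> gball V' E' r' k" for u v
  proof -
    have "?\<psi> u \<in> gball V E r k" "?\<psi> v \<in> gball V E r k"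
      using that iso(1) by (auto simp: bij_betw_def inv_into_into)
    moreover have "\<phi> (?\<psi> u) = u" "\<phi> (?\<psi> v) = v"
      using that iso(1) by (simp_all add: bij_betw_inv_into_right)
    ultimately show ?thesis
      using iso(3) by metis
  qed
  ultimately show ?thesis
    by (simp add: gh ball_iso_simp)
qed

lemma ball_iso_comp:
  assumes "ball_iso g h k \<phi>" "ball_iso h l k \<psi>"
  shows "ball_iso g l k (\<psi> \<circ> \<phi>)"
proof -
  obtain V E r y V' E' r' y' V'' E'' r'' y'' where ghl:
    "g = (V, E, r, y)" "h = (V', E', r', y')" "l = (V'', E'', r'', y'')"
    by (cases g; cases h; cases l) auto
  have \<phi>: "bij_betw \<phi> (gball V E r k) (gball V' E' r' k)" "\<phi> r = r'"
    "\<forall>u \<in> gball V E r k. \<forall>v \<in> gball V E r k. E u v \<longleftrightarrow> E' (\<phi> u) (\<phi> v)"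
    using assms(1) by (simp_all add: ghl ball_iso_simp)
  have \<psi>: "bij_betw \<psi> (gball V' E' r' k) (gball V'' E'' r'' k)" "\<psi> r' = r''"
    "\<forall>u \<in> gball V' E' r' k. \<forall>v \<in> gball V' E' r' k. E' u v \<longleftrightarrow> E'' (\<psi> u) (\<psi> v)"
    using assms(2) by (simp_all add: ghl ball_iso_simp)
  have "E u v \<longleftrightarrow> E'' (\<psi> (\<phi> u)) (\<psi> (\<phi> v))" if "u \<in> gball V E r k" "v \<in> gball V E r k" for u v
    using that \<phi>(3) \<psi>(3) bij_betw_apply[OF \<phi>(1)] by blast
  then show ?thesis
    using bij_betw_trans[OF \<phi>(1) \<psi>(1)] \<phi>(2) \<psi>(2) by (simp add: ghl ball_iso_simp)
qed

lemma rg_iso_imp_ball_iso: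
  assumes g: "valid_rg g" and h: "valid_rg h" and "rg_iso g h"
  shows "\<exists>\<phi>. \<forall>k. ball_iso g h k \<phi> \<and> (\<forall>v\<in>rg_ball g k. rg_marks h (\<phi> v) = rg_marks g v)"
proof -
  obtain V E r y V' E' r' y' where gh: "g = (V, E, r, y)" "h = (V', E', r', y')"
    by (cases g; cases h) auto
  obtain \<phi> where iso: "bij_betw \<phi> V V'" "\<phi> r = r'" "\<forall>u \<in> V. \<forall>v \<in> V. E u v \<longleftrightarrow> E' (\<phi> u) (\<phi> v)"
    and marks: "\<forall>v \<in> V. y' (\<phi> v) = y v"
    using \<open>rg_iso g h\<close> unfolding gh rg_iso_def by auto
  have balls: "gball V E r k \<subseteq> V" "gball V' E' r' k \<subseteq> V'" for k
    using gball_subset[OF valid_rgD(1)[OF g[unfolded gh]]]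
      gball_subset[OF valid_rgD(1)[OF h[unfolded gh]]] by auto
  have "ball_iso g h k \<phi>" for k
  proof -
    have "\<phi> ` gball V E r k = gball V' E' r' k"
      using g h iso balls by (intro image_gball_eq[where A=V and A'=V' and k=k]) (simp_all add: gh)
    moreover have "inj_on \<phi> (gball V E r k)"
      using iso(1) balls(1) by (auto simp: bij_betw_def intro: inj_on_subset)
    ultimately show ?thesis
      using iso(2,3) balls(1) by (simp add: gh ball_iso_simp bij_betw_def subset_iff)
  qed
  moreover have "rg_marks h (\<phi> v) = rg_marks g v" if "v \<in> rg_ball g k" for k v
    using marks balls that by (auto simp: gh)
  ultimately show ?thesis by blast
qed

lemma ball_iso_neighbours:
  assumes g: "valid_rg (V, E, r, x)" and h: "valid_rg (V', E', r', x')"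
    and iso: "ball_iso (V, E, r, x) (V', E', r', x') (Suc k) \<psi>" and w: "w \<in> gball V E r k"
  shows "{u \<in> V'. E' (\<psi> w) u} = \<psi> ` {u \<in> V. E w u}" and "inj_on \<psi> {u \<in> V. E w u}"
proof -
  have bij: "bij_betw \<psi> (gball V E r (Suc k)) (gball V' E' r' (Suc k))"
    and edges: "\<forall>u \<in> gball V E r (Suc k). \<forall>v \<in> gball V E r (Suc k). E u v \<longleftrightarrow> E' (\<psi> u) (\<psi> v)"
    using iso unfolding ball_iso_simp by blast+
  have N: "{u \<in> V. E w u} \<subseteq> gball V E r (Suc k)" and wS: "w \<in> gball V E r (Suc k)"
    using w by auto
  show "{u \<in> V'. E' (\<psi> w) u} = \<psi> ` {u \<in> V. E w u}"
  proof (intro equalityI subsetI)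
    fix u' assume u': "u' \<in> {u \<in> V'. E' (\<psi> w) u}"
    have "ball_iso (V, E, r, x) (V', E', r', x') k \<psi>"
      using ball_iso_mono[OF g h iso le_SucI[OF order_refl]] .
    then have "bij_betw \<psi> (gball V E r k) (gball V' E' r' k)"
      unfolding ball_iso_simp by blast
    then have "\<psi> w \<in> gball V' E' r' k"
      using w by (rule bij_betw_apply)
    then have "u' \<in> gball V' E' r' (Suc k)"
      using u' by auto
    then obtain u where u: "u \<in> gball V E r (Suc k)" "u' = \<psi> u"
      using bij unfolding bij_betw_def by blast
    have "E' (\<psi> w) (\<psi> u)"
      using u' u(2) by simp
    then have "E w u"
      using edges wS u(1) by blast
    then show "u' \<in> \<psi> ` {u \<in> V. E w u}"
      using u valid_rgD(2)[OF g] by blast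
  next
    fix u' assume "u' \<in> \<psi> ` {u \<in> V. E w u}"
    then obtain u where u: "u \<in> V" "E w u" "u' = \<psi> u" by blast
    then have "u \<in> gball V E r (Suc k)"
      using N by blast
    then have "E' (\<psi> w) u'"
      using edges wS u by blast
    then show "u' \<in> {u \<in> V'. E' (\<psi> w) u}"
      using valid_rgD(2)[OF h] by blast
  qed
  show "inj_on \<psi> {u \<in> V. E w u}"
    using bij N unfolding bij_betw_def by (rule inj_on_subset[OF conjunct1])
qed

lemma limitin_neighbour_multisets:
  assumes g: "valid_rg (V, E, r, x)" and gs: "\<And>n. valid_rg (Vs n, Es n, rs n, xs n)"
    and iso: "\<And>k. eventually (\<lambda>n. ball_iso (V, E, r, x) (Vs n, Es n, rs n, xs n) k (\<psi> n)) sequentially"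
    and w: "w \<in> V"
    and f: "\<And>n u. f n u \<in> topspace T"
    and lim: "\<And>u. u \<in> V \<Longrightarrow> limitin T (\<lambda>n. f n (\<psi> n u)) (l u) sequentially"
  shows "limitin (mset_topology T) (\<lambda>n. image_mset (f n) (mset_set {u \<in> Vs n. Es n (\<psi> n w) u}))
      (image_mset l (mset_set {u \<in> V. E w u})) sequentially"
proof -
  let ?N = "{u \<in> V. E w u}"
  have "finite ?N"
    using valid_rgD(3)[OF g w] by (auto intro: finite_subset)
  then have "limitin (mset_topology T) (\<lambda>n. image_mset (\<lambda>u. f n (\<psi> n u)) (mset_set ?N))
      (image_mset l (mset_set ?N)) sequentially"
    using f lim by (intro limitin_mset_topology_image_mset) auto
  moreover obtain k where "w \<in> gball V E r k"
    using valid_rgD(4)[OF g w] by blast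
  then have "eventually (\<lambda>n. image_mset (\<lambda>u. f n (\<psi> n u)) (mset_set ?N) =
      image_mset (f n) (mset_set {u \<in> Vs n. Es n (\<psi> n w) u})) sequentially"
    using iso[of "Suc k"]
    by (elim eventually_mono) (simp add: ball_iso_neighbours[OF g gs] image_mset_mset_set[symmetric]
        multiset.map_comp o_def)
  ultimately show ?thesis
    by (rule limitin_transform_eventually[rotated])
qed

section \<open>Local convergence of rooted graphs\<close>

definition balls_close :: "('y::metric_space) rg \<Rightarrow> 'y rg \<Rightarrow> nat \<Rightarrow> real \<Rightarrow> bool" where
  "balls_close g h k e \<longleftrightarrow>
     (\<exists>\<phi>. ball_iso g h k \<phi> \<and> (\<forall>v\<in>rg_ball g k. dist (rg_marks g v) (rg_marks h (\<phi> v)) \<le> e))"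

lemma rg_conv_iff_balls_close:
  "rg_conv gs g \<longleftrightarrow> (\<forall>k. \<forall>e>0. eventually (\<lambda>n. balls_close (gs n) g k e) sequentially)"
proof -
  have rg_conv: "rg_conv gs g \<longleftrightarrow> (\<forall>k. \<forall>e>0. eventually (\<lambda>n. \<exists>\<phi>. ball_iso (gs n) g k \<phi> \<and>
      (\<forall>v\<in>rg_ball (gs n) k. dist (rg_marks (gs n) v) (rg_marks g (\<phi> v)) < e)) sequentially)"
    unfolding rg_conv_def eventually_sequentially rg_ball_def rg_marks_def ..
  show ?thesis
  proof
    assume "rg_conv gs g"
    have "eventually (\<lambda>n. balls_close (gs n) g k e) sequentially" if "e > 0" for k e
    proof -
      have "eventually (\<lambda>n. \<exists>\<phi>. ball_iso (gs n) g k \<phi> \<and>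
          (\<forall>v\<in>rg_ball (gs n) k. dist (rg_marks (gs n) v) (rg_marks g (\<phi> v)) < e)) sequentially"
        using \<open>rg_conv gs g\<close> that unfolding rg_conv by blast
      then show ?thesis
        unfolding balls_close_def by (rule eventually_mono) (auto intro: less_imp_le)
    qed
    then show "\<forall>k. \<forall>e>0. eventually (\<lambda>n. balls_close (gs n) g k e) sequentially"
      by blast
  next
    assume close: "\<forall>k. \<forall>e>0. eventually (\<lambda>n. balls_close (gs n) g k e) sequentially"
    have "eventually (\<lambda>n. \<exists>\<phi>. ball_iso (gs n) g k \<phi> \<and>
      (\<forall>v\<in>rg_ball (gs n) k. dist (rg_marks (gs n) v) (rg_marks g (\<phi> v)) < e)) sequentially"
      if "e > 0" for k e
    proof -
      have "eventually (\<lambda>n. balls_close (gs n) g k (e / 2)) sequentially"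
        using close that by simp
      moreover have "e / 2 < e"
        using that by simp
      ultimately show ?thesis
        unfolding balls_close_def by (elim eventually_mono) (meson le_less_trans)
    qed
    then show "rg_conv gs g"
      unfolding rg_conv by blast
  qed
qed

lemma balls_close_refl: "balls_close g g k 0"
  unfolding balls_close_def using ball_iso_id by fastforce

lemma balls_close_mono:
  assumes "valid_rg g" "valid_rg h" "balls_close g h k e" "j \<le> k" "e \<le> e'"
  shows "balls_close g h j e'"
proof -
  obtain \<phi> where iso: "ball_iso g h k \<phi>"
    and marks: "\<forall>v\<in>rg_ball g k. dist (rg_marks g v) (rg_marks h (\<phi> v)) \<le> e"
    using assms(3) unfolding balls_close_def by blast
  have "ball_iso g h j \<phi>"
    using assms(1,2) iso assms(4) by (rule ball_iso_mono)
  moreover have "\<forall>v\<in>rg_ball g j. dist (rg_marks g v) (rg_marks h (\<phi> v)) \<le> e'"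
    using marks rg_ball_mono[OF assms(4)] assms(5) by fastforce
  ultimately show ?thesis
    unfolding balls_close_def by blast
qed

lemma balls_close_sym:
  assumes "balls_close g h k e"
  shows "balls_close h g k e"
proof -
  obtain \<phi> where iso: "ball_iso g h k \<phi>"
    and marks: "\<forall>v\<in>rg_ball g k. dist (rg_marks g v) (rg_marks h (\<phi> v)) \<le> e"
    using assms unfolding balls_close_def by blast
  let ?\<psi> = "inv_into (rg_ball g k) \<phi>"
  have "dist (rg_marks h v) (rg_marks g (?\<psi> v)) \<le> e" if "v \<in> rg_ball h k" for v
  proof -
    have "?\<psi> v \<in> rg_ball g k" "\<phi> (?\<psi> v) = v"
      using that ball_iso_bij_betw[OF iso]
      by (auto simp: bij_betw_def inv_into_into bij_betw_inv_into_right)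
    then show ?thesis
      using marks by (metis dist_commute)
  qed
  then show ?thesis
    using ball_iso_inv[OF iso] unfolding balls_close_def by blast
qed

lemma balls_close_trans:
  assumes "balls_close g h k e" "balls_close h l k e'"
  shows "balls_close g l k (e + e')"
proof -
  obtain \<phi> where \<phi>: "ball_iso g h k \<phi>" "\<forall>v\<in>rg_ball g k. dist (rg_marks g v) (rg_marks h (\<phi> v)) \<le> e"
    using assms(1) unfolding balls_close_def by blast
  obtain \<psi> where \<psi>: "ball_iso h l k \<psi>" "\<forall>v\<in>rg_ball h k. dist (rg_marks h v) (rg_marks l (\<psi> v)) \<le> e'"
    using assms(2) unfolding balls_close_def by blast
  have "dist (rg_marks g v) (rg_marks l (\<psi> (\<phi> v))) \<le> e + e'" if "v \<in> rg_ball g k" for v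
  proof -
    have "\<phi> v \<in> rg_ball h k"
      using that ball_iso_bij_betw[OF \<phi>(1)] by (rule bij_betw_apply[rotated])
    then show ?thesis
      using that \<phi>(2) \<psi>(2) dist_triangle[of "rg_marks g v" "rg_marks l (\<psi> (\<phi> v))" "rg_marks h (\<phi> v)"]
      by force
  qed
  then show ?thesis
    using ball_iso_comp[OF \<phi>(1) \<psi>(1)] unfolding balls_close_def by auto
qed

lemma rg_conv_if_ball_isos:
  assumes g: "valid_rg (V, E, r, y)" and gs: "\<And>n. valid_rg (gs n)"
    and iso: "\<And>k. eventually (\<lambda>n. ball_iso (V, E, r, y) (gs n) k (\<psi> n)) sequentially"
    and marks: "\<And>w. w \<in> V \<Longrightarrow> (\<lambda>n. rg_marks (gs n) (\<psi> n w)) \<longlonglongrightarrow> y w"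
  shows "rg_conv gs (V, E, r, y)"
  unfolding rg_conv_iff_balls_close
proof (intro allI impI)
  fix k and e :: real assume "e > 0"
  have "\<forall>\<^sub>F n in sequentially. \<forall>w\<in>gball V E r k. dist (rg_marks (gs n) (\<psi> n w)) (y w) < e"
  proof (rule eventually_ball_finite[OF finite_gball[OF g]], rule ballI)
    fix w assume "w \<in> gball V E r k"
    then have "w \<in> V"
      using gball_subset valid_rgD(1)[OF g] by blast
    then show "\<forall>\<^sub>F n in sequentially. dist (rg_marks (gs n) (\<psi> n w)) (y w) < e"
      using tendstoD[OF marks \<open>e > 0\<close>] by blast
  qed
  with iso[of k] have "eventually (\<lambda>n. balls_close (V, E, r, y) (gs n) k e) sequentially"
  proof (rule eventually_elim2)
    fix n assume "ball_iso (V, E, r, y) (gs n) k (\<psi> n)"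
      and "\<forall>w\<in>gball V E r k. dist (rg_marks (gs n) (\<psi> n w)) (y w) < e"
    then show "balls_close (V, E, r, y) (gs n) k e"
      unfolding balls_close_def by (auto simp: dist_commute intro!: exI[of _ "\<psi> n"] less_imp_le)
  qed
  then show "eventually (\<lambda>n. balls_close (gs n) (V, E, r, y) k e) sequentially"
    by (rule eventually_mono) (rule balls_close_sym)
qed

lemma eventually_diagonal:
  assumes "\<And>k. eventually (P k) sequentially"
  shows "\<exists>L :: nat \<Rightarrow> nat. \<forall>k. eventually (\<lambda>n. k \<le> L n \<and> P (L n) n) sequentially"
proof -
  obtain N where N: "\<And>k n. N k \<le> n \<Longrightarrow> P k n"
    using assms unfolding eventually_sequentially by metis
  define M where "M k = Max (N ` {..k})" for k
  have NM: "N j \<le> M k" if "j \<le> k" for j k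
    unfolding M_def using that by (intro Max_ge) auto
  define S where "S n = {k. k \<le> n \<and> M k \<le> n}" for n
  define L where "L n = Max (insert 0 (S n))" for n
  have "eventually (\<lambda>n. k \<le> L n \<and> P (L n) n) sequentially" for k
    unfolding eventually_sequentially
  proof (intro exI allI impI)
    fix n assume "max k (M k) \<le> n"
    then have "k \<in> S n"
      unfolding S_def by auto
    moreover have "finite (S n)"
      unfolding S_def by auto
    ultimately have "L n \<in> insert 0 (S n)" "k \<le> L n"
      unfolding L_def by (intro Max_in Max_ge; simp)+
    then have "L n \<in> S n"
      using \<open>k \<in> S n\<close> by (metis insertE le_zero_eq)
    then have "P (L n) n"
      using N NM[of "L n" "L n"] unfolding S_def by auto
    with \<open>k \<le> L n\<close> show "k \<le> L n \<and> P (L n) n" ..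
  qed
  then show ?thesis by blast
qed

lemma rg_conv_imp_close_ball_isos:
  assumes "rg_conv gs g"
  obtains L \<psi> where "\<And>k. eventually (\<lambda>n. k \<le> L n \<and> ball_iso g (gs n) (L n) (\<psi> n) \<and>
      (\<forall>v\<in>rg_ball g (L n). dist (rg_marks g v) (rg_marks (gs n) (\<psi> n v)) \<le> 1 / Suc (L n))) sequentially"
proof -
  have "eventually (\<lambda>n. balls_close g (gs n) k (1 / Suc k)) sequentially" for k
  proof -
    have "eventually (\<lambda>n. balls_close (gs n) g k (1 / Suc k)) sequentially"
      using assms unfolding rg_conv_iff_balls_close by simp
    then show ?thesis
      by (rule eventually_mono) (rule balls_close_sym)
  qed
  then obtain L where L: "\<And>k. eventually (\<lambda>n. k \<le> L n \<and> balls_close g (gs n) (L n) (1 / Suc (L n))) sequentially"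
    using eventually_diagonal[where P="\<lambda>k n. balls_close g (gs n) k (1 / Suc k)"] by blast
  define \<psi> where "\<psi> n = (SOME \<phi>. ball_iso g (gs n) (L n) \<phi> \<and>
      (\<forall>v\<in>rg_ball g (L n). dist (rg_marks g v) (rg_marks (gs n) (\<phi> v)) \<le> 1 / Suc (L n)))" for n
  have \<psi>: "ball_iso g (gs n) (L n) (\<psi> n) \<and>
      (\<forall>v\<in>rg_ball g (L n). dist (rg_marks g v) (rg_marks (gs n) (\<psi> n v)) \<le> 1 / Suc (L n))"
    if "balls_close g (gs n) (L n) (1 / Suc (L n))" for n
    using that unfolding balls_close_def \<psi>_def by (rule someI_ex)
  have "eventually (\<lambda>n. k \<le> L n \<and> ball_iso g (gs n) (L n) (\<psi> n) \<and>
      (\<forall>v\<in>rg_ball g (L n). dist (rg_marks g v) (rg_marks (gs n) (\<psi> n v)) \<le> 1 / Suc (L n))) sequentially"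
    for k
    using L[of k] by (rule eventually_mono) (use \<psi> in blast)
  then show ?thesis
    by (rule that)
qed

lemma rg_conv_imp_ball_isos:
  assumes g: "valid_rg (V, E, r, x)" and conv: "rg_conv gs (V, E, r, x)"
  obtains L \<psi> where "\<And>k. eventually (\<lambda>n. k \<le> L n \<and> ball_iso (V, E, r, x) (gs n) (L n) (\<psi> n)) sequentially"
    and "\<And>w. w \<in> V \<Longrightarrow> (\<lambda>n. rg_marks (gs n) (\<psi> n w)) \<longlonglongrightarrow> x w"
proof -
  obtain L \<psi> where L: "\<And>k. eventually (\<lambda>n. k \<le> L n \<and> ball_iso (V, E, r, x) (gs n) (L n) (\<psi> n) \<and>
      (\<forall>v\<in>gball V E r (L n). dist (x v) (rg_marks (gs n) (\<psi> n v)) \<le> 1 / Suc (L n))) sequentially"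
    using rg_conv_imp_close_ball_isos[OF conv] by auto
  have "(\<lambda>n. rg_marks (gs n) (\<psi> n w)) \<longlonglongrightarrow> x w" if w: "w \<in> V" for w
  proof (rule tendstoI)
    fix e :: real assume "0 < e"
    obtain k0 where k0: "w \<in> gball V E r k0"
      using valid_rgD(4)[OF g w] by blast
    obtain k1 where k1: "1 / Suc k1 < e"
      using reals_Archimedean[OF \<open>0 < e\<close>] by (auto simp: inverse_eq_divide)
    show "eventually (\<lambda>n. dist (rg_marks (gs n) (\<psi> n w)) (x w) < e) sequentially"
      using L[of "max k0 k1"]
    proof (rule eventually_mono, elim conjE)
      fix n assume le: "max k0 k1 \<le> L n"
        and close: "\<forall>v\<in>gball V E r (L n). dist (x v) (rg_marks (gs n) (\<psi> n v)) \<le> 1 / Suc (L n)"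
      have "w \<in> gball V E r (L n)"
        using k0 gball_mono[of k0 "L n"] le by auto
      then have "dist (x w) (rg_marks (gs n) (\<psi> n w)) \<le> 1 / Suc (L n)"
        using close by blast
      also have "\<dots> \<le> 1 / Suc k1"
        using le by (simp add: frac_le)
      finally show "dist (rg_marks (gs n) (\<psi> n w)) (x w) < e"
        using k1 by (simp add: dist_commute)
    qed
  qed
  moreover have "eventually (\<lambda>n. k \<le> L n \<and> ball_iso (V, E, r, x) (gs n) (L n) (\<psi> n)) sequentially" for k
    using L[of k] by (rule eventually_mono) blast
  ultimately show ?thesis
    using that by blast
qed

lemma finite_bij_betw_extend:
  fixes f :: "'a \<Rightarrow> 'a"
  assumes A: "finite A" and B: "finite B" and f: "bij_betw f A B"
  obtains \<sigma> where "bij \<sigma>" "\<And>a. a \<in> A \<Longrightarrow> \<sigma> a = f a"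
proof -
  define C where "C = A \<union> B"
  have C: "A \<subseteq> C" "B \<subseteq> C" "finite C"
    using A B by (auto simp: C_def)
  have "card (C - A) = card (C - B)"
    using card_Diff_subset[OF A C(1)] card_Diff_subset[OF B C(2)] bij_betw_same_card[OF f] by simp
  moreover have "finite (C - A)" "finite (C - B)"
    using C(3) by simp_all
  ultimately obtain h where h: "bij_betw h (C - A) (C - B)"
    using finite_same_card_bij by metis
  define \<sigma> where "\<sigma> x = (if x \<in> A then f x else if x \<in> C then h x else x)" for x
  have "bij_betw \<sigma> A B \<longleftrightarrow> bij_betw f A B"
    by (rule bij_betw_cong) (simp add: \<sigma>_def)
  moreover have "bij_betw \<sigma> (C - A) (C - B) \<longleftrightarrow> bij_betw h (C - A) (C - B)"
    by (rule bij_betw_cong) (simp add: \<sigma>_def)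
  ultimately have "bij_betw \<sigma> (A \<union> (C - A)) (B \<union> (C - B))"
    using f h by (intro bij_betw_combine) auto
  moreover have "A \<union> (C - A) = C" "B \<union> (C - B) = C"
    using C by auto
  moreover have "bij_betw \<sigma> (- C) (- C) \<longleftrightarrow> bij_betw id (- C) (- C)"
    by (rule bij_betw_cong) (simp add: \<sigma>_def C_def)
  ultimately have "bij_betw \<sigma> (C \<union> - C) (C \<union> - C)"
    by (intro bij_betw_combine) auto
  then have "bij \<sigma>"
    by simp
  then show ?thesis
    using that by (simp add: \<sigma>_def)
qed

lemma ball_isos_extend_to_bijections:
  assumes g: "valid_rg (V, E, r, x)" and gs: "\<And>n. valid_rg (gs n)"
    and iso: "\<And>k. eventually (\<lambda>n. k \<le> L n \<and> ball_iso (V, E, r, x) (gs n) (L n) (\<psi> n)) sequentially"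
  obtains \<beta> where "\<And>n. bij (\<beta> n)" "\<And>w. w \<in> V \<Longrightarrow> eventually (\<lambda>n. \<beta> n w = \<psi> n w) sequentially"
proof -
  have "\<exists>\<beta>. bij \<beta> \<and> (ball_iso (V, E, r, x) (gs n) (L n) (\<psi> n) \<longrightarrow> (\<forall>v\<in>gball V E r (L n). \<beta> v = \<psi> n v))"
    for n
  proof (cases "ball_iso (V, E, r, x) (gs n) (L n) (\<psi> n)")
    case True
    then have "bij_betw (\<psi> n) (gball V E r (L n)) (rg_ball (gs n) (L n))"
      using ball_iso_bij_betw by fastforce
    moreover have "finite (rg_ball (gs n) (L n))"
      using gs[of n] by (cases "gs n") (simp add: finite_gball)
    ultimately obtain \<beta> where "bij \<beta>" "\<And>v. v \<in> gball V E r (L n) \<Longrightarrow> \<beta> v = \<psi> n v"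
      using finite_bij_betw_extend finite_gball[OF g] by metis
    then show ?thesis by blast
  qed (use bij_id in blast)
  then obtain \<beta> where \<beta>: "\<And>n. bij (\<beta> n)"
    "\<And>n v. ball_iso (V, E, r, x) (gs n) (L n) (\<psi> n) \<Longrightarrow> v \<in> gball V E r (L n) \<Longrightarrow> \<beta> n v = \<psi> n v"
    by metis
  have "eventually (\<lambda>n. \<beta> n w = \<psi> n w) sequentially" if w: "w \<in> V" for w
  proof -
    obtain k where k: "w \<in> gball V E r k"
      using valid_rgD(4)[OF g w] by blast
    show ?thesis
      using iso[of k]
    proof (rule eventually_mono, elim conjE)
      fix n assume "k \<le> L n" and iso_n: "ball_iso (V, E, r, x) (gs n) (L n) (\<psi> n)"
      then have "w \<in> gball V E r (L n)"
        using k gball_mono by blast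
      then show "\<beta> n w = \<psi> n w"
        using \<beta>(2)[OF iso_n] by blast
    qed
  qed
  then show ?thesis
    using that \<beta>(1) by blast
qed

section \<open>The local topology on isomorphism classes\<close>

definition class_rep :: "'y rg set \<Rightarrow> 'y rg" where
  "class_rep a = (SOME g. g \<in> a)"

lemma in_rg_class: "valid_rg g \<Longrightarrow> g \<in> rg_class g"
  unfolding rg_class_def rg_iso_def by (cases g) (auto intro!: exI[of _ id])

lemma rg_class_in_Gstar: "valid_rg g \<Longrightarrow> rg_class g \<in> Gstar"
  unfolding Gstar_def by blast

lemma valid_rg_if_in_Gstar: "a \<in> Gstar \<Longrightarrow> g \<in> a \<Longrightarrow> valid_rg g"
  unfolding Gstar_def rg_class_def by auto

lemma class_rep_in: "a \<in> Gstar \<Longrightarrow> class_rep a \<in> a"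
  unfolding class_rep_def Gstar_def by (auto intro: someI in_rg_class)

lemma valid_rg_class_rep: "a \<in> Gstar \<Longrightarrow> valid_rg (class_rep a)"
  using class_rep_in valid_rg_if_in_Gstar by blast

lemma balls_close_same_class:
  assumes "a \<in> Gstar" "g \<in> a" "h \<in> a"
  shows "balls_close g h k 0"
proof -
  obtain b where b: "valid_rg b" "a = rg_class b"
    using assms(1) unfolding Gstar_def by auto
  have close: "balls_close g' b k 0" if "g' \<in> a" for g'
  proof -
    have g': "valid_rg g'" "rg_iso g' b"
      using that b unfolding rg_class_def by auto
    then obtain \<phi> where "ball_iso g' b k \<phi>" "\<forall>v\<in>rg_ball g' k. rg_marks b (\<phi> v) = rg_marks g' v"
      using rg_iso_imp_ball_iso[OF g'(1) b(1)] by blast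
    then show ?thesis
      unfolding balls_close_def by auto
  qed
  have "balls_close g h k (0 + 0)"
    using close[OF assms(2)] balls_close_sym[OF close[OF assms(3)]] by (rule balls_close_trans)
  then show ?thesis
    by simp
qed

lemma Gconv_iff_rg_conv_class_rep:
  assumes "\<And>n. cs n \<in> Gstar" "c \<in> Gstar"
  shows "Gconv cs c \<longleftrightarrow> rg_conv (\<lambda>n. class_rep (cs n)) (class_rep c)"
proof
  assume "Gconv cs c"
  then obtain gs g where gs: "\<And>n. gs n \<in> cs n" "g \<in> c" "rg_conv gs g"
    unfolding Gconv_def by blast
  have close: "balls_close (class_rep (cs n)) (class_rep c) k e"
    if "balls_close (gs n) g k e" for n k e
  proof -
    have "balls_close (class_rep (cs n)) (gs n) k 0"
      using assms(1) class_rep_in[OF assms(1)] gs(1) by (rule balls_close_same_class)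
    then have "balls_close (class_rep (cs n)) g k (0 + e)"
      using that by (rule balls_close_trans)
    moreover have "balls_close g (class_rep c) k 0"
      using assms(2) gs(2) class_rep_in[OF assms(2)] by (rule balls_close_same_class)
    ultimately show ?thesis
      using balls_close_trans[of "class_rep (cs n)" g k "0 + e" "class_rep c" 0] by simp
  qed
  show "rg_conv (\<lambda>n. class_rep (cs n)) (class_rep c)"
    unfolding rg_conv_iff_balls_close
  proof (intro allI impI)
    fix k and e :: real assume "e > 0"
    then have "eventually (\<lambda>n. balls_close (gs n) g k e) sequentially"
      using gs(3) unfolding rg_conv_iff_balls_close by blast
    then show "eventually (\<lambda>n. balls_close (class_rep (cs n)) (class_rep c) k e) sequentially"
      by (rule eventually_mono) (rule close)
  qed
next
  assume "rg_conv (\<lambda>n. class_rep (cs n)) (class_rep c)"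
  then show "Gconv cs c"
    unfolding Gconv_def using assms class_rep_in by (intro exI conjI allI) auto
qed

lemma Gconv_rg_class:
  assumes "\<And>n. valid_rg (gs n)" "valid_rg g" "rg_conv gs g"
  shows "Gconv (\<lambda>n. rg_class (gs n)) (rg_class g)"
  unfolding Gconv_def using assms in_rg_class by blast

text \<open>A pseudometric inducing \<open>Gconv\<close>; whether distance \<open>0\<close> forces equal classes is neither shown
  nor needed.\<close>

definition local_dist_bounds :: "('y::metric_space) rg set \<Rightarrow> 'y rg set \<Rightarrow> real set" where
  "local_dist_bounds a b =
     insert 1 {max ((1/2)^k) e | k e. 0 \<le> e \<and> balls_close (class_rep a) (class_rep b) k e}"

definition local_dist :: "('y::metric_space) rg set \<Rightarrow> 'y rg set \<Rightarrow> real" where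
  "local_dist a b = Inf (local_dist_bounds a b)"

lemma local_dist_bounds_nonneg: "s \<in> local_dist_bounds a b \<Longrightarrow> 0 \<le> s"
  unfolding local_dist_bounds_def by auto

lemma bdd_below_local_dist_bounds: "bdd_below (local_dist_bounds a b)"
  using local_dist_bounds_nonneg by (rule bdd_belowI)

lemma local_dist_nonneg: "0 \<le> local_dist a b"
  unfolding local_dist_def
  by (intro cInf_greatest local_dist_bounds_nonneg) (auto simp: local_dist_bounds_def)

lemma local_dist_le_bound: "s \<in> local_dist_bounds a b \<Longrightarrow> local_dist a b \<le> s"
  unfolding local_dist_def by (intro cInf_lower bdd_below_local_dist_bounds)

lemma local_dist_le_1: "local_dist a b \<le> 1"
  by (rule local_dist_le_bound) (simp add: local_dist_bounds_def)

lemma local_dist_le: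
  "balls_close (class_rep a) (class_rep b) k e \<Longrightarrow> 0 \<le> e \<Longrightarrow> local_dist a b \<le> max ((1/2)^k) e"
  by (rule local_dist_le_bound) (auto simp: local_dist_bounds_def)

lemma local_dist_lessE:
  assumes "local_dist a b < t" "t \<le> 1"
  obtains k e where "0 \<le> e" "balls_close (class_rep a) (class_rep b) k e" "max ((1/2)^k) e < t"
proof -
  obtain s where "s \<in> local_dist_bounds a b" "s < t"
    using assms(1) unfolding local_dist_def local_dist_bounds_def by (meson cInf_lessD insert_not_empty)
  then show ?thesis
    using that assms(2) unfolding local_dist_bounds_def by auto
qed

lemma local_dist_self: "local_dist a a = 0"
proof -
  have "local_dist a a \<le> (1/2)^k" for k
    using local_dist_le[OF balls_close_refl] by simp
  then have "local_dist a a \<le> 0"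
    by (intro LIMSEQ_le_const[OF LIMSEQ_power_zero]) auto
  then show ?thesis
    using local_dist_nonneg by (rule antisym)
qed

lemma local_dist_sym: "local_dist a b = local_dist b a"
  unfolding local_dist_def local_dist_bounds_def by (metis balls_close_sym)

lemma local_dist_le_add_bounds:
  assumes a: "a \<in> Gstar" and b: "b \<in> Gstar" and c: "c \<in> Gstar"
    and s1: "s1 \<in> local_dist_bounds a b" and s2: "s2 \<in> local_dist_bounds b c"
  shows "local_dist a c \<le> s1 + s2"
proof (cases "s1 = 1 \<or> s2 = 1")
  case True
  then show ?thesis
    using local_dist_le_1[of a c] local_dist_bounds_nonneg[OF s1] local_dist_bounds_nonneg[OF s2] by auto
next
  case False
  then obtain k1 e1 k2 e2 where
    s1: "s1 = max ((1/2)^k1) e1" "0 \<le> e1" "balls_close (class_rep a) (class_rep b) k1 e1" and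
    s2: "s2 = max ((1/2)^k2) e2" "0 \<le> e2" "balls_close (class_rep b) (class_rep c) k2 e2"
    using s1 s2 unfolding local_dist_bounds_def by auto
  have "balls_close (class_rep a) (class_rep b) (min k1 k2) e1"
    using s1(3) by (rule balls_close_mono[OF valid_rg_class_rep[OF a] valid_rg_class_rep[OF b]]) simp_all
  moreover have "balls_close (class_rep b) (class_rep c) (min k1 k2) e2"
    using s2(3) by (rule balls_close_mono[OF valid_rg_class_rep[OF b] valid_rg_class_rep[OF c]]) simp_all
  ultimately have "balls_close (class_rep a) (class_rep c) (min k1 k2) (e1 + e2)"
    by (rule balls_close_trans)
  then have "local_dist a c \<le> max ((1/2)^min k1 k2) (e1 + e2)"
    using s1(2) s2(2) by (intro local_dist_le) simp_all
  also have "\<dots> \<le> s1 + s2"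
  proof -
    have "(1/2::real)^min k1 k2 \<le> (1/2)^k1 + (1/2)^k2"
      by (cases "k1 \<le> k2") (simp_all add: min_def)
    moreover have "(1/2::real)^k1 \<le> s1" "(1/2::real)^k2 \<le> s2" "e1 \<le> s1" "e2 \<le> s2"
      using s1(1) s2(1) by simp_all
    ultimately show ?thesis
      by (intro max.boundedI) linarith+
  qed
  finally show ?thesis .
qed

lemma local_dist_triangle:
  assumes "a \<in> Gstar" "b \<in> Gstar" "c \<in> Gstar"
  shows "local_dist a c \<le> local_dist a b + local_dist b c"
proof -
  have "local_dist a c - s2 \<le> local_dist a b" if "s2 \<in> local_dist_bounds b c" for s2
    using local_dist_le_add_bounds[OF assms _ that] unfolding local_dist_def[of a b]
    by (intro cInf_greatest) (auto simp: local_dist_bounds_def algebra_simps)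
  then have "local_dist a c - local_dist a b \<le> local_dist b c"
    unfolding local_dist_def[of b c]
    by (intro cInf_greatest) (auto simp: local_dist_bounds_def algebra_simps)
  then show ?thesis
    by simp
qed

lemma rg_conv_if_local_dist_tendsto_0:
  assumes cs: "\<And>n. cs n \<in> Gstar" and c: "c \<in> Gstar" and lim: "(\<lambda>n. local_dist (cs n) c) \<longlonglongrightarrow> 0"
  shows "rg_conv (\<lambda>n. class_rep (cs n)) (class_rep c)"
  unfolding rg_conv_iff_balls_close
proof (intro allI impI)
  fix k and e :: real assume "e > 0"
  define t where "t = min ((1/2::real)^k) e"
  have "(1/2::real)^k \<le> 1"
    by (simp add: power_le_one)
  then have t: "0 < t" "t \<le> 1" "t \<le> (1/2)^k" "t \<le> e"
    using \<open>e > 0\<close> by (auto simp: t_def)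
  show "eventually (\<lambda>n. balls_close (class_rep (cs n)) (class_rep c) k e) sequentially"
    using order_tendstoD(2)[OF lim t(1)]
  proof (rule eventually_mono)
    fix n assume "local_dist (cs n) c < t"
    then obtain k' e' where close: "0 \<le> e'" "balls_close (class_rep (cs n)) (class_rep c) k' e'"
      and small: "max ((1/2)^k') e' < t"
      using t(2) by (rule local_dist_lessE)
    have "(1/2::real)^k' < t"
      using small by simp
    then have "(1/2::real)^k' < (1/2)^k"
      using t(3) by (rule less_le_trans)
    then have "k \<le> k'"
      by (simp add: power_strict_decreasing_iff)
    then show "balls_close (class_rep (cs n)) (class_rep c) k e"
      using small t(4) valid_rg_class_rep[OF cs] valid_rg_class_rep[OF c]
      by (intro balls_close_mono[OF _ _ close(2)]) simp_all
  qed
qed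

lemma local_dist_tendsto_0_if_rg_conv:
  assumes conv: "rg_conv (\<lambda>n. class_rep (cs n)) (class_rep c)"
  shows "(\<lambda>n. local_dist (cs n) c) \<longlonglongrightarrow> 0"
proof (rule order_tendstoI)
  fix t :: real assume "0 < t"
  then obtain k where k: "(1/2::real)^k < t"
    using real_arch_pow_inv[of t "1/2"] by auto
  have "eventually (\<lambda>n. balls_close (class_rep (cs n)) (class_rep c) k (t / 2)) sequentially"
    using conv \<open>0 < t\<close> unfolding rg_conv_iff_balls_close by simp
  then show "eventually (\<lambda>n. local_dist (cs n) c < t) sequentially"
  proof (rule eventually_mono)
    fix n assume "balls_close (class_rep (cs n)) (class_rep c) k (t / 2)"
    then have "local_dist (cs n) c \<le> max ((1/2)^k) (t / 2)"
      using \<open>0 < t\<close> by (intro local_dist_le) simp_all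
    then show "local_dist (cs n) c < t"
      using k \<open>0 < t\<close> by simp
  qed
qed (use local_dist_nonneg in \<open>auto intro: always_eventually order.strict_trans2\<close>)

lemma seq_pseudometric_local_dist: "seq_pseudometric (Gstar :: ('y::metric_space) rg set set) Gconv local_dist"
proof
  fix cs :: "nat \<Rightarrow> 'y rg set" and c :: "'y rg set" assume "\<And>n. cs n \<in> Gstar" "c \<in> Gstar"
  then show "Gconv cs c \<longleftrightarrow> (\<lambda>n. local_dist (cs n) c) \<longlonglongrightarrow> 0"
    using Gconv_iff_rg_conv_class_rep rg_conv_if_local_dist_tendsto_0 local_dist_tendsto_0_if_rg_conv
    by metis
qed (use local_dist_nonneg local_dist_self local_dist_sym local_dist_triangle in auto)

lemma open_indicators_continuous_sup_Gtop: "open_indicators_continuous_sup Gtop"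
  unfolding Gtop_def
  by (rule seq_pseudometric.open_indicators_continuous_sup_seq_topology[OF seq_pseudometric_local_dist])

section \<open>Continuous dependence of the dynamics on the graph, the marks and the noise\<close>

locale continuous_dynamics =
  fixes F :: "nat \<Rightarrow> (nat \<Rightarrow> 'x::metric_space) \<Rightarrow> (nat \<Rightarrow> 'x) multiset \<Rightarrow> 'e::topological_space \<Rightarrow> 'x"
  assumes F_cont: "\<And>k. continuous_map
      (prod_topology (hist_top k) (prod_topology (mset_topology (hist_top k)) (euclidean :: 'e topology)))
      (euclidean :: 'x topology) (\<lambda>(a, m, e). F k a m e)"
begin

lemma tendsto_traj:
  assumes g: "valid_rg (V, E, r, x)" and gs: "\<And>n. valid_rg (Vs n, Es n, rs n, xs n)"
    and iso: "\<And>k. eventually (\<lambda>n. ball_iso (V, E, r, x) (Vs n, Es n, rs n, xs n) k (\<psi> n)) sequentially"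
    and marks: "\<And>w. w \<in> V \<Longrightarrow> (\<lambda>n. xs n (\<psi> n w)) \<longlonglongrightarrow> x w"
    and noise: "\<And>w j. w \<in> V \<Longrightarrow> (\<lambda>n. \<xi>s n (\<psi> n w, j)) \<longlonglongrightarrow> \<xi> (w, j)"
    and "w \<in> V"
  shows "(\<lambda>n. traj F (Vs n) (Es n) (xs n) (\<xi>s n) j (\<psi> n w) i) \<longlonglongrightarrow> traj F V E x \<xi> j w i"
  using \<open>w \<in> V\<close>
proof (induction j arbitrary: w i)
  case 0
  then show ?case using marks by simp
next
  case (Suc j)
  let ?hist = "\<lambda>T u. restrict (T u) {..j}"
  let ?Ts = "\<lambda>n. ?hist (traj F (Vs n) (Es n) (xs n) (\<xi>s n) j)" and ?T = "?hist (traj F V E x \<xi> j)"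
  have hist: "limitin (hist_top j) (\<lambda>n. ?Ts n (\<psi> n u)) (?T u) sequentially" if "u \<in> V" for u
    using Suc.IH[OF that] by (rule limitin_hist_top)
  have "limitin (mset_topology (hist_top j)) (\<lambda>n. image_mset (?Ts n) (mset_set {u \<in> Vs n. Es n (\<psi> n w) u}))
      (image_mset ?T (mset_set {u \<in> V. E w u})) sequentially"
    using hist by (intro limitin_neighbour_multisets[OF g gs iso Suc.prems])
      (simp_all add: topspace_product_topology)
  then have "limitin (prod_topology (hist_top j) (prod_topology (mset_topology (hist_top j)) euclidean))
      (\<lambda>n. (?Ts n (\<psi> n w), image_mset (?Ts n) (mset_set {u \<in> Vs n. Es n (\<psi> n w) u}), \<xi>s n (\<psi> n w, Suc j)))
      (?T w, image_mset ?T (mset_set {u \<in> V. E w u}), \<xi> (w, Suc j)) sequentially"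
    using hist[OF Suc.prems] noise[OF Suc.prems] by (simp add: limitin_pairwise o_def)
  from continuous_map_limit[OF F_cont this]
  show ?case
    by (cases "i = Suc j") (simp_all add: o_def Suc.IH[OF Suc.prems])
qed

lemma rg_conv_proc:
  assumes g: "valid_rg (V, E, r, x)" and gs: "\<And>n. valid_rg (Vs n, Es n, rs n, xs n)"
    and iso: "\<And>k. eventually (\<lambda>n. ball_iso (V, E, r, x) (Vs n, Es n, rs n, xs n) k (\<psi> n)) sequentially"
    and marks: "\<And>w. w \<in> V \<Longrightarrow> (\<lambda>n. xs n (\<psi> n w)) \<longlonglongrightarrow> x w"
    and noise: "\<And>w j. w \<in> V \<Longrightarrow> (\<lambda>n. \<xi>s n (\<psi> n w, j)) \<longlonglongrightarrow> \<xi> (w, j)"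
  shows "rg_conv (\<lambda>n. (Vs n, Es n, rs n, proc F (Vs n) (Es n) (xs n) (\<xi>s n))) (V, E, r, proc F V E x \<xi>)"
proof (rule rg_conv_if_ball_isos)
  show "valid_rg (V, E, r, proc F V E x \<xi>)" "valid_rg (Vs n, Es n, rs n, proc F (Vs n) (Es n) (xs n) (\<xi>s n))"
    for n
    using g gs valid_rg_marks_irrelevant by blast+
  show "eventually (\<lambda>n. ball_iso (V, E, r, proc F V E x \<xi>)
      (Vs n, Es n, rs n, proc F (Vs n) (Es n) (xs n) (\<xi>s n)) k (\<psi> n)) sequentially" for k
    using iso[of k] ball_iso_marks_irrelevant by (simp add: ball_iso_simp)
  show "(\<lambda>n. rg_marks (Vs n, Es n, rs n, proc F (Vs n) (Es n) (xs n) (\<xi>s n)) (\<psi> n w))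
      \<longlonglongrightarrow> proc F V E x \<xi> w" if "w \<in> V" for w
    unfolding rg_marks_simp tendsto_fun_iff proc_def
    using tendsto_traj[where Vs=Vs and Es=Es and rs=rs and xs=xs and \<psi>=\<psi> and \<xi>s=\<xi>s,
        OF g gs iso marks noise that] by blast
qed

lemma rg_conv_proc_permuted_noise:
  assumes g: "valid_rg (V, E, r, x)" and gs: "\<And>n. valid_rg (Vs n, Es n, rs n, xs n)"
    and iso: "\<And>k. eventually (\<lambda>n. ball_iso (V, E, r, x) (Vs n, Es n, rs n, xs n) k (\<psi> n)) sequentially"
    and marks: "\<And>w. w \<in> V \<Longrightarrow> (\<lambda>n. xs n (\<psi> n w)) \<longlonglongrightarrow> x w"
    and \<beta>: "\<And>n. bij (\<beta> n)" "\<And>w. w \<in> V \<Longrightarrow> eventually (\<lambda>n. \<beta> n w = \<psi> n w) sequentially"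
  shows "rg_conv (\<lambda>n. (Vs n, Es n, rs n, proc F (Vs n) (Es n) (xs n) (\<xi> \<circ> apfst (inv (\<beta> n)))))
      (V, E, r, proc F V E x \<xi>)"
proof (rule rg_conv_proc[where Vs=Vs and Es=Es and rs=rs and xs=xs and \<psi>=\<psi>, OF g gs iso marks])
  fix w j assume "w \<in> V"
  show "(\<lambda>n. (\<xi> \<circ> apfst (inv (\<beta> n))) (\<psi> n w, j)) \<longlonglongrightarrow> \<xi> (w, j)"
  proof (rule tendsto_eventually)
    show "eventually (\<lambda>n. (\<xi> \<circ> apfst (inv (\<beta> n))) (\<psi> n w, j) = \<xi> (w, j)) sequentially"
      using \<beta>(2)[OF \<open>w \<in> V\<close>]
    proof (rule eventually_mono)
      fix n assume "\<beta> n w = \<psi> n w"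
      then have "inv (\<beta> n) (\<psi> n w) = w"
        using bij_is_inj[OF \<beta>(1)] by (metis inv_f_f)
      then show "(\<xi> \<circ> apfst (inv (\<beta> n))) (\<psi> n w, j) = \<xi> (w, j)"
        by simp
    qed
  qed
qed

end

section \<open>The laws of the process\<close>

locale noisy_dynamics = continuous_dynamics F
  for F :: "nat \<Rightarrow> (nat \<Rightarrow> 'x::metric_space) \<Rightarrow> (nat \<Rightarrow> 'x) multiset \<Rightarrow> 'e::polish_space \<Rightarrow> 'x" +
  fixes \<nu> :: "'e measure"
  assumes noise_prob: "prob_space \<nu>"
    and noise_borel: "sets \<nu> = sets (borel :: 'e measure)"
begin

abbreviation noise :: "(nat \<times> nat \<Rightarrow> 'e) measure" where
  "noise \<equiv> Pi\<^sub>M UNIV (\<lambda>_. \<nu>)"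

lemma prob_space_noise: "prob_space noise"
  using noise_prob by (intro prob_space_PiM) simp

lemma sets_noise: "sets noise = sets (borel :: (nat \<times> nat \<Rightarrow> 'e) measure)"
proof -
  have "sets noise = sets (Pi\<^sub>M UNIV (\<lambda>_::nat \<times> nat. borel :: 'e measure))"
    using noise_borel by (intro sets_PiM_cong) simp_all
  then show ?thesis
    by (simp add: sets_PiM_equal_borel)
qed

lemma distr_noise_permute_vertices:
  assumes "bij \<beta>"
  shows "(\<lambda>\<xi>. \<xi> \<circ> apfst \<beta>) \<in> measurable noise noise" and "distr noise noise (\<lambda>\<xi>. \<xi> \<circ> apfst \<beta>) = noise"
proof -
  have eq: "(\<lambda>\<xi>. \<xi> \<circ> apfst \<beta>) = (\<lambda>\<xi>. \<lambda>i\<in>UNIV. \<xi> (apfst \<beta> i))"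
    by (simp add: o_def restrict_UNIV)
  show "(\<lambda>\<xi>. \<xi> \<circ> apfst \<beta>) \<in> measurable noise noise"
    unfolding eq by (intro measurable_restrict measurable_component_singleton) simp
  show "distr noise noise (\<lambda>\<xi>. \<xi> \<circ> apfst \<beta>) = noise"
    unfolding eq using distr_PiM_reindex[of UNIV "\<lambda>_. \<nu>" "apfst \<beta>" UNIV] noise_prob assms
    by (simp add: bij_is_inj)
qed

lemma measurable_proc_class:
  assumes g: "valid_rg (V, E, r, x)"
  shows "(\<lambda>\<xi>. rg_class (V, E, r, proc F V E x \<xi>)) \<in> measurable noise (borel_of Gtop)"
proof -
  have valid: "valid_rg (V, E, r, proc F V E x \<xi>)" for \<xi>
    using g valid_rg_marks_irrelevant by blast
  have "continuous_map euclidean Gtop (\<lambda>\<xi>. rg_class (V, E, r, proc F V E x \<xi>))"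
    unfolding Gtop_def
  proof (rule continuous_map_into_seq_topology)
    show "rg_class (V, E, r, proc F V E x \<xi>) \<in> Gstar" for \<xi>
      using valid by (rule rg_class_in_Gstar)
    fix \<xi>s :: "nat \<Rightarrow> nat \<times> nat \<Rightarrow> 'e" and \<xi> assume "\<xi>s \<longlonglongrightarrow> \<xi>"
    then have "rg_conv (\<lambda>n. (V, E, r, proc F V E x (\<xi>s n))) (V, E, r, proc F V E x \<xi>)"
      by (intro rg_conv_proc[OF g g, where \<psi>="\<lambda>_. id"]) (auto simp: ball_iso_id tendsto_fun_iff)
    then show "Gconv (\<lambda>n. rg_class (V, E, r, proc F V E x (\<xi>s n))) (rg_class (V, E, r, proc F V E x \<xi>))"
      by (rule Gconv_rg_class[OF valid valid])
  qed
  then show ?thesis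
    using continuous_map_measurable_into_borel_of measurable_cong_sets[OF sets_noise refl] by blast
qed

lemma PGx_eq_distr:
  "PGx F \<nu> (V, E, r, x) = distr noise (borel_of Gtop) (\<lambda>\<xi>. rg_class (V, E, r, proc F V E x \<xi>))"
  by (simp add: PGx_def)

lemma sets_PGx: "sets (PGx F \<nu> g) = sets (borel_of Gtop)"
  by (cases g) (simp add: PGx_eq_distr)

lemma prob_space_PGx: "valid_rg g \<Longrightarrow> prob_space (PGx F \<nu> g)"
  using prob_space.prob_space_distr[OF prob_space_noise measurable_proc_class]
  by (cases g) (simp add: PGx_eq_distr)

lemma PGx_permute_noise:
  assumes g: "valid_rg (V, E, r, x)" and "bij \<beta>"
  shows "PGx F \<nu> (V, E, r, x) = distr noise (borel_of Gtop) (\<lambda>\<xi>. rg_class (V, E, r, proc F V E x (\<xi> \<circ> apfst \<beta>)))"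
proof -
  have "distr noise (borel_of Gtop) (\<lambda>\<xi>. rg_class (V, E, r, proc F V E x (\<xi> \<circ> apfst \<beta>))) =
      distr (distr noise noise (\<lambda>\<xi>. \<xi> \<circ> apfst \<beta>)) (borel_of Gtop) (\<lambda>\<xi>. rg_class (V, E, r, proc F V E x \<xi>))"
    using distr_distr[OF measurable_proc_class[OF g] distr_noise_permute_vertices(1)[OF \<open>bij \<beta>\<close>]]
    by (simp add: comp_def)
  then show ?thesis
    by (simp add: distr_noise_permute_vertices(2)[OF \<open>bij \<beta>\<close>] PGx_eq_distr)
qed

lemma weak_conv_PGx:
  assumes gs: "\<And>n. valid_rg (gs n)" and g: "valid_rg g" and conv: "rg_conv gs g"
  shows "weak_conv_top Gtop (\<lambda>n. PGx F \<nu> (gs n)) (PGx F \<nu> g)"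
proof -
  obtain V E r x where g_eq: "g = (V, E, r, x)"
    by (cases g) auto
  define Vs Es rs xs where "Vs n = fst (gs n)" and "Es n = fst (snd (gs n))"
    and "rs n = fst (snd (snd (gs n)))" and "xs n = snd (snd (snd (gs n)))" for n
  then have gs_eq: "gs n = (Vs n, Es n, rs n, xs n)" for n
    by simp
  have g': "valid_rg (V, E, r, x)" and gs': "\<And>n. valid_rg (Vs n, Es n, rs n, xs n)"
    using g gs by (simp_all add: g_eq gs_eq)
  obtain L \<psi> where iso: "\<And>k. eventually (\<lambda>n. k \<le> L n \<and> ball_iso (V, E, r, x) (gs n) (L n) (\<psi> n)) sequentially"
    and "\<And>w. w \<in> V \<Longrightarrow> (\<lambda>n. rg_marks (gs n) (\<psi> n w)) \<longlonglongrightarrow> x w"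
    using rg_conv_imp_ball_isos[OF g' conv[unfolded g_eq]] by blast
  then have marks: "\<And>w. w \<in> V \<Longrightarrow> (\<lambda>n. xs n (\<psi> n w)) \<longlonglongrightarrow> x w"
    by (simp add: gs_eq)
  obtain \<beta> where \<beta>: "\<And>n. bij (\<beta> n)" "\<And>w. w \<in> V \<Longrightarrow> eventually (\<lambda>n. \<beta> n w = \<psi> n w) sequentially"
    using ball_isos_extend_to_bijections[OF g' gs iso] by blast
  have iso': "eventually (\<lambda>n. ball_iso (V, E, r, x) (Vs n, Es n, rs n, xs n) k (\<psi> n)) sequentially" for k
    using iso[of k] by (rule eventually_mono) (use ball_iso_mono[OF g' gs] gs_eq in metis)
  let ?X = "\<lambda>n \<xi>. rg_class (Vs n, Es n, rs n, proc F (Vs n) (Es n) (xs n) (\<xi> \<circ> apfst (inv (\<beta> n))))"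
  let ?Y = "\<lambda>\<xi>. rg_class (V, E, r, proc F V E x \<xi>)"
  have "weak_conv_top Gtop (\<lambda>n. distr noise (borel_of Gtop) (?X n)) (distr noise (borel_of Gtop) ?Y)"
  proof (rule weak_conv_top_distr_if_limitin[OF prob_space_noise])
    show "?X n \<in> measurable noise (borel_of Gtop)" for n
      using measurable_compose[OF distr_noise_permute_vertices(1) measurable_proc_class[OF gs']]
        bij_imp_bij_inv[OF \<beta>(1)] by (simp add: comp_def)
    show "?Y \<in> measurable noise (borel_of Gtop)"
      using g' by (rule measurable_proc_class)
    fix \<xi>
    have "Gconv (\<lambda>n. ?X n \<xi>) (?Y \<xi>)"
      using rg_conv_proc_permuted_noise[OF g' gs' iso' marks \<beta>] g' gs' valid_rg_marks_irrelevant
      by (intro Gconv_rg_class) blast+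
    then show "limitin Gtop (\<lambda>n. ?X n \<xi>) (?Y \<xi>) sequentially"
      unfolding Gtop_def using g' gs' valid_rg_marks_irrelevant rg_class_in_Gstar
      by (intro limitin_seq_topology) blast+
  qed
  then show ?thesis
    using PGx_permute_noise[OF gs' bij_imp_bij_inv[OF \<beta>(1)]] by (simp add: g_eq gs_eq PGx_eq_distr)
qed

lemma Pclass_eq: "Pclass F \<nu> c = PGx F \<nu> (class_rep c)"
  by (simp add: Pclass_def class_rep_def)

lemma sets_Pclass: "sets (Pclass F \<nu> c) = sets (borel_of Gtop)"
  by (simp add: Pclass_eq sets_PGx)

lemma space_Pclass: "space (Pclass F \<nu> c) = Gstar"
  using sets_eq_imp_space_eq[OF sets_Pclass] by (simp add: space_borel_of Gtop_def)

lemma prob_space_Pclass: "c \<in> Gstar \<Longrightarrow> prob_space (Pclass F \<nu> c)"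
  by (simp add: Pclass_eq prob_space_PGx valid_rg_class_rep)

lemma continuous_map_integral_Pclass:
  assumes "continuous_map Gtop euclideanreal \<phi>" "bounded (\<phi> ` topspace Gtop)"
  shows "continuous_map Gtop euclideanreal (\<lambda>c. \<integral>z. \<phi> z \<partial>Pclass F \<nu> c)"
  unfolding Gtop_def
proof (rule continuous_map_seq_topology)
  fix cs :: "nat \<Rightarrow> 'x rg set" and c assume cs: "\<And>n. cs n \<in> Gstar" and c: "c \<in> Gstar"
    and "Gconv cs c"
  then have "rg_conv (\<lambda>n. class_rep (cs n)) (class_rep c)"
    by (simp add: Gconv_iff_rg_conv_class_rep)
  then have "weak_conv_top Gtop (\<lambda>n. PGx F \<nu> (class_rep (cs n))) (PGx F \<nu> (class_rep c))"
    by (rule weak_conv_PGx[OF valid_rg_class_rep[OF cs] valid_rg_class_rep[OF c]])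
  then show "(\<lambda>n. \<integral>z. \<phi> z \<partial>Pclass F \<nu> (cs n)) \<longlonglongrightarrow> (\<integral>z. \<phi> z \<partial>Pclass F \<nu> c)"
    using assms unfolding weak_conv_top_def Pclass_eq by blast
qed

lemma bounded_integral_Pclass:
  assumes "continuous_map Gtop euclideanreal \<phi>" "bounded (\<phi> ` topspace Gtop)"
  shows "bounded ((\<lambda>c. \<integral>z. \<phi> z \<partial>Pclass F \<nu> c) ` topspace Gtop)"
proof -
  obtain B where B: "\<And>z. z \<in> Gstar \<Longrightarrow> \<bar>\<phi> z\<bar> \<le> B"
    using assms(2) unfolding bounded_iff by (auto simp: Gtop_def)
  have "\<bar>\<integral>z. \<phi> z \<partial>Pclass F \<nu> c\<bar> \<le> B" if "c \<in> Gstar" for c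
  proof (rule prob_space.abs_integral_le_const[OF prob_space_Pclass[OF that]])
    show "\<phi> \<in> borel_measurable (Pclass F \<nu> c)"
      using continuous_map_measurable_borel_of[OF assms(1)] measurable_cong_sets[OF sets_Pclass refl] by blast
  qed (simp add: space_Pclass B)
  then show ?thesis
    unfolding bounded_iff by (auto simp: Gtop_def)
qed

lemma is_PM_bind:
  assumes M: "prob_space M" "sets M = sets (borel_of Gtop)"
  shows "is_PM F \<nu> M (M \<bind> Pclass F \<nu>)"
proof -
  have space_M: "space M = Gstar"
    using sets_eq_imp_space_eq[OF M(2)] by (simp add: space_borel_of Gtop_def)
  have integral_meas: "(\<lambda>c. \<integral>z. \<phi> z \<partial>Pclass F \<nu> c) \<in> borel_measurable M"
    if "continuous_map Gtop euclideanreal \<phi>" "bounded (\<phi> ` topspace Gtop)" for \<phi>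
    using continuous_map_measurable_borel_of[OF continuous_map_integral_Pclass[OF that]]
      measurable_cong_sets[OF M(2) refl] by blast
  have K: "Pclass F \<nu> \<in> measurable M (prob_algebra (borel_of Gtop))"
    using open_indicators_continuous_sup_Gtop
    by (rule measurable_prob_algebra_if_integrals_measurable)
      (simp_all add: space_M prob_space_Pclass sets_Pclass integral_meas)
  have M_space: "M \<in> space (prob_algebra M)"
    using M(1) by (simp add: space_prob_algebra)
  have "(\<integral>z. \<phi> z \<partial>(M \<bind> Pclass F \<nu>)) = (\<integral>c. (\<integral>z. \<phi> z \<partial>Pclass F \<nu> c) \<partial>M)"
    if \<phi>: "continuous_map Gtop euclideanreal \<phi>" "bounded (\<phi> ` topspace Gtop)" for \<phi>
  proof -
    obtain B where B: "\<And>z. z \<in> topspace Gtop \<Longrightarrow> \<bar>\<phi> z\<bar> \<le> B"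
      using \<phi>(2) unfolding bounded_iff by auto
    show ?thesis
    proof (rule integral_bind[where K="borel_of Gtop" and B=B and B'=1])
      show "\<phi> \<in> borel_measurable (borel_of Gtop)"
        using \<phi>(1) by (rule continuous_map_measurable_borel_of)
      show "Pclass F \<nu> \<in> measurable M (subprob_algebra (borel_of Gtop))"
        using K by (rule measurable_prob_algebraD)
      show "AE c in M. emeasure (Pclass F \<nu> c) (space (Pclass F \<nu> c)) \<le> ennreal 1"
        by (intro AE_I2) (simp add: space_M prob_space_Pclass prob_space.emeasure_space_1)
    qed (use B M(1) prob_space.finite_measure in \<open>auto simp: space_borel_of\<close>)
  qed
  then show ?thesis
    unfolding is_PM_def using prob_space_bind'[OF M_space K] sets_bind'[OF M_space K] integral_meas
    by blast
qed

lemma ex1_is_PM: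
  assumes M: "prob_space M" "sets M = sets (borel_of Gtop)"
  shows "\<exists>!Q. is_PM F \<nu> M Q"
proof (rule ex1I[where a="M \<bind> Pclass F \<nu>"])
  show "is_PM F \<nu> M (M \<bind> Pclass F \<nu>)"
    using M by (rule is_PM_bind)
  fix Q assume Q: "is_PM F \<nu> M Q"
  show "Q = M \<bind> Pclass F \<nu>"
  proof (rule finite_measure_eq_if_integrals_eq[OF open_indicators_continuous_sup_Gtop])
    show "finite_measure Q" "sets Q = sets (borel_of Gtop)"
      using Q prob_space.finite_measure unfolding is_PM_def by blast+
    show "finite_measure (M \<bind> Pclass F \<nu>)" "sets (M \<bind> Pclass F \<nu>) = sets (borel_of Gtop)"
      using is_PM_bind[OF M] prob_space.finite_measure unfolding is_PM_def by blast+
    show "(\<integral>z. \<phi> z \<partial>Q) = (\<integral>z. \<phi> z \<partial>(M \<bind> Pclass F \<nu>))"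
      if "continuous_map Gtop euclideanreal \<phi>" "bounded (\<phi> ` topspace Gtop)" for \<phi>
      using Q is_PM_bind[OF M] that unfolding is_PM_def by auto
  qed
qed

lemma weak_conv_PM:
  assumes Ms: "\<And>n. prob_space (Ms n)" "\<And>n. sets (Ms n) = sets (borel_of Gtop)"
    and M: "prob_space M" "sets M = sets (borel_of Gtop)"
    and conv: "weak_conv_top Gtop Ms M"
  shows "weak_conv_top Gtop (\<lambda>n. PM F \<nu> (Ms n)) (PM F \<nu> M)"
  unfolding weak_conv_top_def
proof (intro allI impI, elim conjE)
  fix \<phi> :: "(nat \<Rightarrow> 'x) rg set \<Rightarrow> real"
  assume \<phi>: "continuous_map Gtop euclideanreal \<phi>" "bounded (\<phi> ` topspace Gtop)"
  have PM: "(\<integral>z. \<phi> z \<partial>PM F \<nu> N) = (\<integral>c. (\<integral>z. \<phi> z \<partial>Pclass F \<nu> c) \<partial>N)"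
    if "prob_space N" "sets N = sets (borel_of Gtop)" for N :: "'x rg set measure"
    using theI'[OF ex1_is_PM[OF that]] \<phi> unfolding PM_def is_PM_def by blast
  show "(\<lambda>n. \<integral>z. \<phi> z \<partial>PM F \<nu> (Ms n)) \<longlonglongrightarrow> (\<integral>z. \<phi> z \<partial>PM F \<nu> M)"
    using conv continuous_map_integral_Pclass[OF \<phi>] bounded_integral_Pclass[OF \<phi>]
    unfolding weak_conv_top_def PM[OF Ms] PM[OF M] by blast
qed

end

theorem theorem3p2:
  fixes F :: "nat \<Rightarrow> (nat \<Rightarrow> 'x::polish_space) \<Rightarrow> (nat \<Rightarrow> 'x) multiset \<Rightarrow> 'e::polish_space \<Rightarrow> 'x"
    and \<nu> :: "'e measure"
  assumes noise_prob: "prob_space \<nu>"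
    and noise_borel: "sets \<nu> = sets (borel :: 'e measure)"
    and F_cont: "\<And>k. continuous_map
        (prod_topology (hist_top k) (prod_topology (mset_topology (hist_top k)) (euclidean :: 'e topology)))
        (euclidean :: 'x topology) (\<lambda>(a, m, e). F k a m e)"
  shows "(\<forall>gs g. (\<forall>n. valid_rg (gs n)) \<and> valid_rg g \<and> rg_conv gs g \<longrightarrow>
            weak_conv_top Gtop (\<lambda>n. PGx F \<nu> (gs n)) (PGx F \<nu> g))
       \<and> (\<forall>M. prob_space M \<and> sets M = sets (borel_of (Gtop :: 'x rg set topology)) \<longrightarrow>
            (\<exists>!Q. is_PM F \<nu> M Q))
       \<and> (\<forall>Ms M. (\<forall>n. prob_space (Ms n) \<and> sets (Ms n) = sets (borel_of (Gtop :: 'x rg set topology))) \<and>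
             prob_space M \<and> sets M = sets (borel_of (Gtop :: 'x rg set topology)) \<and>
             weak_conv_top Gtop Ms M \<longrightarrow>
            weak_conv_top Gtop (\<lambda>n. PM F \<nu> (Ms n)) (PM F \<nu> M))"
proof -
  have "noisy_dynamics F \<nu>"
    using noise_prob noise_borel F_cont
    by (simp add: noisy_dynamics_def noisy_dynamics_axioms_def continuous_dynamics_def)
  then interpret noisy_dynamics F \<nu> .
  show ?thesis
  proof (intro conjI allI impI; elim conjE)
    show "weak_conv_top Gtop (\<lambda>n. PGx F \<nu> (gs n)) (PGx F \<nu> g)"
      if "\<forall>n. valid_rg (gs n)" "valid_rg g" "rg_conv gs g" for gs g
      using that by (intro weak_conv_PGx) simp_all
    show "\<exists>!Q. is_PM F \<nu> M Q" if "prob_space M" "sets M = sets (borel_of Gtop)" for M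
      using that by (rule ex1_is_PM)
    show "weak_conv_top Gtop (\<lambda>n. PM F \<nu> (Ms n)) (PM F \<nu> M)"
      if "\<forall>n. prob_space (Ms n) \<and> sets (Ms n) = sets (borel_of Gtop)"
        "prob_space M" "sets M = sets (borel_of Gtop)" "weak_conv_top Gtop Ms M" for Ms M
      using that by (intro weak_conv_PM) simp_all
  qed
qed

end
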